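(* For all $m,n\ge1$, the complete split graph $K_m\vee nK_1$ is determined by its $A_\alpha$-spectrum for every $\alpha\in(1/2,1)$.
   Context: All graphs are finite, simple and undirected. $A_\alpha(G)=\alpha D(G)+(1-\alpha)A(G)$ with $A(G)$ the adjacency and $D(G)$ the degree matrix. A graph is determined by its $A_\alpha$-spectrum if every graph whose $A_\alpha$ matrix has the same multiset of eigenvalues is isomorphic to it. $nK_1$ is the edgeless graph on $n$ vertices, $K_m$ the complete graph, and $\vee$ the join (disjoint union plus all edges between the two vertex sets); $K_m\vee nK_1$ is the complete split graph. *)

theory Defs
  imports "Jordan_Normal_Form.Char_Poly" "HOL-Computational_Algebra.Polynomial"
begin

text \<open>A finite simple graph with vertex set {0..<n} and adjacency relation E
  (symmetric, irreflexive, supported on the vertex set). Every finite simple graph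
  is isomorphic to one of this form.\<close>
definition simple_graph :: "nat \<Rightarrow> (nat \<Rightarrow> nat \<Rightarrow> bool) \<Rightarrow> bool" where
  "simple_graph n E \<longleftrightarrow>
     (\<forall>i j. E i j \<longrightarrow> i < n \<and> j < n) \<and> (\<forall>i j. E i j \<longrightarrow> E j i) \<and> (\<forall>i. \<not> E i i)"

definition degree :: "nat \<Rightarrow> (nat \<Rightarrow> nat \<Rightarrow> bool) \<Rightarrow> nat \<Rightarrow> nat" where
  "degree n E i = card {j. j < n \<and> E i j}"

definition adj_matrix :: "nat \<Rightarrow> (nat \<Rightarrow> nat \<Rightarrow> bool) \<Rightarrow> real mat" where
  "adj_matrix n E = mat n n (\<lambda>(i, j). if E i j then 1 else 0)"

definition deg_matrix :: "nat \<Rightarrow> (nat \<Rightarrow> nat \<Rightarrow> bool) \<Rightarrow> real mat" where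
  "deg_matrix n E = mat n n (\<lambda>(i, j). if i = j then real (degree n E i) else 0)"

definition A_alpha :: "real \<Rightarrow> nat \<Rightarrow> (nat \<Rightarrow> nat \<Rightarrow> bool) \<Rightarrow> real mat" where
  "A_alpha \<alpha> n E = \<alpha> \<cdot>\<^sub>m deg_matrix n E + (1 - \<alpha>) \<cdot>\<^sub>m adj_matrix n E"

definition spectrum_mset :: "real mat \<Rightarrow> complex multiset" where
  "spectrum_mset M = proots (char_poly (map_mat complex_of_real M))"

definition graph_iso :: "nat \<Rightarrow> (nat \<Rightarrow> nat \<Rightarrow> bool) \<Rightarrow> nat \<Rightarrow> (nat \<Rightarrow> nat \<Rightarrow> bool) \<Rightarrow> bool" where
  "graph_iso n E n' E' \<longleftrightarrow> (\<exists>f. bij_betw f {0..<n} {0..<n'} \<and>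
      (\<forall>i<n. \<forall>j<n. E i j \<longleftrightarrow> E' (f i) (f j)))"

definition determined_by_A_alpha_spectrum :: "real \<Rightarrow> nat \<Rightarrow> (nat \<Rightarrow> nat \<Rightarrow> bool) \<Rightarrow> bool" where
  "determined_by_A_alpha_spectrum \<alpha> n E \<longleftrightarrow>
     (\<forall>n' E'. simple_graph n' E' \<longrightarrow>
        spectrum_mset (A_alpha \<alpha> n' E') = spectrum_mset (A_alpha \<alpha> n E) \<longrightarrow>
        graph_iso n' E' n E)"

text \<open>K_m join nK_1: vertices 0..<m form a clique, vertices m..<m+n independent,
  all edges between the two parts.\<close>
definition complete_split :: "nat \<Rightarrow> nat \<Rightarrow> nat \<Rightarrow> nat \<Rightarrow> bool" where
  "complete_split m n i j \<longleftrightarrow> i < m + n \<and> j < m + n \<and> i \<noteq> j \<and> (i < m \<or> j < m)"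

end

theory Submission
  imports Defs "Jordan_Normal_Form.Schur_Decomposition"
begin

text \<open>Cospectral matrices have equal traces of p(A) for every polynomial p; with p(x) = x and x^2 this
  fixes the degree sum and the squared degree sum of a cospectral mate G of K_m \<or> nK_1, which for
  n = 1 already forces G = K_{m+1}.

  For n \<ge> 2, A_\<alpha>(K_m \<or> nK_1) is annihilated by a product of four distinct linear factors, one of
  them x - l with l = \<alpha>(m + n) - 1. For a symmetric matrix, tr(p(A)^2) = 0 forces p(A) = 0, so
  A_\<alpha>(G) is annihilated as well and its spectral projections (Lagrange interpolation) have the same
  traces as those of K_m \<or> nK_1. For \<alpha> > 1/2, the quadratic form of l I - A_\<alpha> + (1 - \<alpha>) J
  dominates 2\<alpha> - 1 times the complement degree form; hence l-eigenvectors are supported on the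
  dominating vertices, and if there are D > 0 of them the l-eigenspace has dimension D - 1. So G has
  exactly m dominating vertices, which together with the degree sum makes G = K_m \<or> nK_1. A graph
  without dominating vertex is excluded: for m \<ge> 2 its l- and th1-eigenspaces together have
  dimension at most one, and for m = 1 the degree sums are violated.\<close>

section \<open>Traces of matrix polynomials\<close>

definition mat_trace :: "'a::comm_ring_1 mat \<Rightarrow> 'a" where
  "mat_trace A = (\<Sum>i<dim_row A. A $$ (i,i))"

definition lin_factor_prod :: "'a::comm_ring_1 mat \<Rightarrow> 'a list \<Rightarrow> 'a mat" where
  "lin_factor_prod A cs = foldr (\<lambda>c B. (A - c \<cdot>\<^sub>m 1\<^sub>m (dim_row A)) * B) cs (1\<^sub>m (dim_row A))"

lemma lin_factor_prod_Nil [simp]: "lin_factor_prod A [] = 1\<^sub>m (dim_row A)"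
  by (simp add: lin_factor_prod_def)

lemma lin_factor_prod_Cons:
  "lin_factor_prod A (c # cs) = (A - c \<cdot>\<^sub>m 1\<^sub>m (dim_row A)) * lin_factor_prod A cs"
  by (simp add: lin_factor_prod_def)

lemma lin_factor_prod_carrier [simp]:
  "A \<in> carrier_mat n n \<Longrightarrow> lin_factor_prod A cs \<in> carrier_mat n n"
  by (induct cs) (auto simp: lin_factor_prod_Cons)

lemma lin_factor_prod_append:
  assumes A: "A \<in> carrier_mat n n"
  shows "lin_factor_prod A (xs @ ys) = lin_factor_prod A xs * lin_factor_prod A ys"
proof (induct xs)
  case Nil
  then show ?case using A by (simp add: left_mult_one_mat[of _ n n])
next
  case (Cons x xs)
  have "lin_factor_prod A ((x # xs) @ ys) = (A - x \<cdot>\<^sub>m 1\<^sub>m n) * (lin_factor_prod A xs * lin_factor_prod A ys)"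
    using Cons A by (simp add: lin_factor_prod_Cons)
  also have "\<dots> = ((A - x \<cdot>\<^sub>m 1\<^sub>m n) * lin_factor_prod A xs) * lin_factor_prod A ys"
    using A by (subst assoc_mult_mat[of _ n n _ n _ n]) auto
  finally show ?case using A by (simp add: lin_factor_prod_Cons)
qed

lemma similar_mat_wit_conj_mult:
  assumes wit: "similar_mat_wit A B P Q" and n: "n = dim_row A"
    and X: "X \<in> carrier_mat n n" and Y: "Y \<in> carrier_mat n n"
  shows "(P * X * Q) * (P * Y * Q) = P * (X * Y) * Q"
proof -
  from similar_mat_witD[OF n wit] have QP: "Q * P = 1\<^sub>m n"
    and P: "P \<in> carrier_mat n n" and Q: "Q \<in> carrier_mat n n" by auto
  have "(P * X * Q) * (P * Y * Q) = P * (X * ((Q * P) * (Y * Q)))"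
    using P Q X Y by (simp add: assoc_mult_mat[of _ n n _ n _ n])
  also have "\<dots> = P * (X * Y) * Q"
    using P Q X Y QP by (simp add: assoc_mult_mat[of _ n n _ n _ n])
  finally show ?thesis .
qed

lemma lin_factor_prod_similar:
  assumes wit: "similar_mat_wit A B P Q"
  shows "lin_factor_prod A cs = P * lin_factor_prod B cs * Q"
proof -
  define n where "n = dim_row A"
  from similar_mat_witD[OF n_def wit] have PQ: "P * Q = 1\<^sub>m n" and AB: "A = P * B * Q"
    and B: "B \<in> carrier_mat n n" and P: "P \<in> carrier_mat n n" and Q: "Q \<in> carrier_mat n n"
    by auto
  have shift: "A - c \<cdot>\<^sub>m 1\<^sub>m n = P * (B - c \<cdot>\<^sub>m 1\<^sub>m n) * Q" for c
  proof -
    have "P * (B - c \<cdot>\<^sub>m 1\<^sub>m n) * Q = P * B * Q - P * (c \<cdot>\<^sub>m 1\<^sub>m n) * Q"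
      using P B Q by (simp add: mult_minus_distrib_mat[of _ n n _ n] minus_mult_distrib_mat[of _ n n _ _ n])
    also have "P * (c \<cdot>\<^sub>m 1\<^sub>m n) * Q = c \<cdot>\<^sub>m 1\<^sub>m n"
      using P Q PQ by (simp add: mult_smult_distrib[of _ n n _ n] mult_smult_assoc_mat[of _ n n _ n])
    finally show ?thesis using AB by simp
  qed
  have dB: "dim_row B = n" using B by auto
  show ?thesis
  proof (induct cs)
    case Nil
    then show ?case using P Q PQ dB by (simp add: n_def[symmetric])
  next
    case (Cons c cs)
    have "B - c \<cdot>\<^sub>m 1\<^sub>m n \<in> carrier_mat n n" using B by auto
    from similar_mat_wit_conj_mult[OF wit n_def this lin_factor_prod_carrier[OF B]]
    show ?case using Cons by (simp add: lin_factor_prod_Cons n_def[symmetric] dB shift)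
  qed
qed

lemma mat_trace_mult_comm:
  assumes A: "A \<in> carrier_mat n k" and B: "B \<in> carrier_mat k n"
  shows "mat_trace (A * B) = mat_trace (B * A)"
proof -
  have "mat_trace (A * B) = (\<Sum>i<n. \<Sum>j<k. A $$ (i,j) * B $$ (j,i))"
    using A B by (simp add: mat_trace_def scalar_prod_def atLeast0LessThan)
  also have "\<dots> = (\<Sum>j<k. \<Sum>i<n. B $$ (j,i) * A $$ (i,j))"
    by (subst sum.swap) (simp add: mult.commute)
  also have "\<dots> = mat_trace (B * A)"
    using A B by (simp add: mat_trace_def scalar_prod_def atLeast0LessThan)
  finally show ?thesis .
qed

lemma mat_trace_similar:
  assumes wit: "similar_mat_wit A B P Q" and X: "X \<in> carrier_mat (dim_row A) (dim_row A)"
  shows "mat_trace (P * X * Q) = mat_trace X"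
proof -
  define n where "n = dim_row A"
  from similar_mat_witD[OF n_def wit] have QP: "Q * P = 1\<^sub>m n"
    and P: "P \<in> carrier_mat n n" and Q: "Q \<in> carrier_mat n n" by auto
  have "mat_trace (P * X * Q) = mat_trace (Q * (P * X))"
    using P X Q n_def by (intro mat_trace_mult_comm[of _ n n]) auto
  also have "Q * (P * X) = X"
    using P Q X QP n_def by (simp add: assoc_mult_mat[of _ n n _ n _ n, symmetric])
  finally show ?thesis .
qed

lemma upper_triangular_mult:
  assumes X: "X \<in> carrier_mat n n" and Y: "Y \<in> carrier_mat n n"
    and uX: "upper_triangular X" and uY: "upper_triangular Y"
  shows "upper_triangular (X * Y)"
    and "i < n \<Longrightarrow> (X * Y) $$ (i,i) = X $$ (i,i) * Y $$ (i,i)"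
proof -
  have vanish: "X $$ (i,k) * Y $$ (k,j) = 0" if "i < n" "k < n" "j < n" "j < i \<or> (j = i \<and> k \<noteq> i)" for i j k
    using that upper_triangularD[OF uX, of k i] upper_triangularD[OF uY, of j k] X Y
    by (cases "k < i") auto
  show "upper_triangular (X * Y)"
  proof (rule upper_triangularI)
    fix i j assume "j < i" "i < dim_row (X * Y)"
    then show "(X * Y) $$ (i,j) = 0"
      using X Y vanish by (auto simp: scalar_prod_def intro!: sum.neutral)
  qed
  assume i: "i < n"
  have "(X * Y) $$ (i,i) = (\<Sum>k<n. X $$ (i,k) * Y $$ (k,i))"
    using X Y i by (simp add: scalar_prod_def atLeast0LessThan)
  also have "\<dots> = X $$ (i,i) * Y $$ (i,i)"
    using i vanish[OF i _ i] by (subst sum.remove[of _ i]) (auto intro!: sum.neutral)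
  finally show "(X * Y) $$ (i,i) = X $$ (i,i) * Y $$ (i,i)" .
qed

lemma lin_factor_prod_upper_triangular:
  assumes B: "B \<in> carrier_mat n n" and uB: "upper_triangular B"
  shows "upper_triangular (lin_factor_prod B cs)
    \<and> (\<forall>i<n. lin_factor_prod B cs $$ (i,i) = (\<Prod>c\<leftarrow>cs. B $$ (i,i) - c))"
proof (induct cs)
  case Nil
  then show ?case using B by auto
next
  case (Cons c cs)
  have dB: "dim_row B = n" using B by auto
  have F: "B - c \<cdot>\<^sub>m 1\<^sub>m n \<in> carrier_mat n n" using B by auto
  have uF: "upper_triangular (B - c \<cdot>\<^sub>m 1\<^sub>m n)"
    using uB B by (auto intro!: upper_triangularI dest: upper_triangularD)
  show ?case
    using upper_triangular_mult[OF F lin_factor_prod_carrier[OF B] uF] Cons B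
    by (simp add: lin_factor_prod_Cons dB)
qed

lemma mat_trace_lin_factor_prod:
  fixes A :: "complex mat"
  assumes A: "A \<in> carrier_mat n n" and c: "char_poly A = (\<Prod>a\<leftarrow>as. [:- a, 1:])"
  shows "mat_trace (lin_factor_prod A cs) = (\<Sum>a\<leftarrow>as. \<Prod>c\<leftarrow>cs. a - c)"
proof -
  obtain B P Q where s: "schur_decomposition A as = (B,P,Q)"
    by (cases "schur_decomposition A as") auto
  from schur_decomposition[OF A c s] have wit: "similar_mat_wit A B P Q"
    and uB: "upper_triangular B" and dg: "diag_mat B = as" by auto
  have B: "B \<in> carrier_mat n n" using similar_mat_witD2[OF A wit] by auto
  have "mat_trace (lin_factor_prod A cs) = mat_trace (lin_factor_prod B cs)"
    using lin_factor_prod_similar[OF wit, of cs] mat_trace_similar[OF wit] B A by simp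
  also have "\<dots> = (\<Sum>i<n. \<Prod>c\<leftarrow>cs. B $$ (i,i) - c)"
    using lin_factor_prod_upper_triangular[OF B uB, of cs] lin_factor_prod_carrier[OF B, of cs]
    by (simp add: mat_trace_def)
  also have "\<dots> = (\<Sum>a\<leftarrow>diag_mat B. \<Prod>c\<leftarrow>cs. a - c)"
    using B by (simp add: diag_mat_def sum_list_sum_nth atLeast0LessThan)
  finally show ?thesis using dg by simp
qed

lemma proots_prod_linear_factors:
  "proots (\<Prod>a\<leftarrow>as. [:- a, 1:]) = mset (as :: complex list)"
proof -
  have "0 \<notin> set (map (\<lambda>a. [:- a, 1:]) as)" by auto
  from proots_prod_list[OF this] show ?thesis by (simp add: o_def)
qed

lemma map_mat_lin_factor_prod:
  assumes A: "(A :: real mat) \<in> carrier_mat n n"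
  shows "map_mat complex_of_real (lin_factor_prod A cs)
    = lin_factor_prod (map_mat complex_of_real A) (map complex_of_real cs)"
proof (induct cs)
  case Nil
  then show ?case using A by (auto simp: of_real_hom.mat_hom_one)
next
  case (Cons c cs)
  have F: "A - c \<cdot>\<^sub>m 1\<^sub>m n \<in> carrier_mat n n" using A by auto
  have "map_mat complex_of_real (A - c \<cdot>\<^sub>m 1\<^sub>m n)
      = map_mat complex_of_real A - complex_of_real c \<cdot>\<^sub>m 1\<^sub>m n"
    using A by (intro eq_matI) auto
  moreover have "map_mat complex_of_real (lin_factor_prod A (c # cs))
      = map_mat complex_of_real (A - c \<cdot>\<^sub>m 1\<^sub>m n) * map_mat complex_of_real (lin_factor_prod A cs)"
    using A by (simp add: lin_factor_prod_Cons of_real_hom.mat_hom_mult[OF F lin_factor_prod_carrier[OF A]])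
  ultimately show ?case using Cons A by (simp add: lin_factor_prod_Cons)
qed

lemma cospectral_dim_eq:
  assumes "A \<in> carrier_mat n n" "B \<in> carrier_mat k k"
    and "spectrum_mset A = spectrum_mset B"
  shows "n = k"
proof -
  have "size (spectrum_mset X) = j" if "X \<in> carrier_mat j j" for X :: "real mat" and j
  proof -
    have "map_mat complex_of_real X \<in> carrier_mat j j" using that by simp
    from char_poly_factorized[OF this] obtain xs
      where "char_poly (map_mat complex_of_real X) = (\<Prod>a\<leftarrow>xs. [:- a, 1:])" "length xs = j"
      by blast
    then show ?thesis by (simp add: spectrum_mset_def proots_prod_linear_factors)
  qed
  then show ?thesis using assms by metis
qed

lemma cospectral_trace_lin_factor_prod:
  fixes A B :: "real mat"
  assumes A: "A \<in> carrier_mat n n" and B: "B \<in> carrier_mat k k"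
    and sp: "spectrum_mset A = spectrum_mset B"
  shows "mat_trace (lin_factor_prod A cs) = mat_trace (lin_factor_prod B cs)"
proof -
  let ?A = "map_mat complex_of_real A" and ?B = "map_mat complex_of_real B"
  let ?p = "\<lambda>a. \<Prod>c\<leftarrow>map complex_of_real cs. a - c"
  have A': "?A \<in> carrier_mat n n" and B': "?B \<in> carrier_mat k k" using A B by auto
  obtain as where ca: "char_poly ?A = (\<Prod>a\<leftarrow>as. [:- a, 1:])"
    using char_poly_factorized[OF A'] by blast
  obtain bs where cb: "char_poly ?B = (\<Prod>a\<leftarrow>bs. [:- a, 1:])"
    using char_poly_factorized[OF B'] by blast
  have ms: "mset as = mset bs"
    using sp unfolding spectrum_mset_def ca cb proots_prod_linear_factors .
  have trace_complex: "complex_of_real (mat_trace (lin_factor_prod X cs)) = sum_list (map ?p xs)"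
    if X: "X \<in> carrier_mat j j" and cx: "char_poly (map_mat complex_of_real X) = (\<Prod>a\<leftarrow>xs. [:- a, 1:])"
    for X j xs
  proof -
    have "complex_of_real (mat_trace (lin_factor_prod X cs))
        = mat_trace (map_mat complex_of_real (lin_factor_prod X cs))"
      using lin_factor_prod_carrier[OF X, of cs] by (simp add: mat_trace_def)
    also have "\<dots> = sum_list (map ?p xs)"
      unfolding map_mat_lin_factor_prod[OF X]
      by (rule mat_trace_lin_factor_prod[OF _ cx]) (use X in simp)
    finally show ?thesis .
  qed
  have "sum_list (map ?p as) = sum_list (map ?p bs)"
    by (metis ms sum_mset_sum_list mset_map)
  then have "complex_of_real (mat_trace (lin_factor_prod A cs))
      = complex_of_real (mat_trace (lin_factor_prod B cs))"
    using trace_complex[OF A ca] trace_complex[OF B cb] by simp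
  then show ?thesis by (rule of_real_eq_iff[THEN iffD1])
qed

lemma smult_smult_mat: "a \<cdot>\<^sub>m (b \<cdot>\<^sub>m A) = (a * b :: 'a::semigroup_mult) \<cdot>\<^sub>m A"
  by (intro eq_matI) (auto simp: mult.assoc)

lemma transpose_smult_mat: "transpose_mat (a \<cdot>\<^sub>m A) = a \<cdot>\<^sub>m transpose_mat A"
  by (intro eq_matI) auto

lemma one_smult_mat [simp]: "(1::'a::monoid_mult) \<cdot>\<^sub>m A = A"
  by (intro eq_matI) auto

lemma zero_smult_mat: "A \<in> carrier_mat n k \<Longrightarrow> (0::'a::mult_zero) \<cdot>\<^sub>m A = 0\<^sub>m n k"
  by (intro eq_matI) auto

lemma shift_mult_comm:
  assumes A: "(A :: 'a::comm_ring_1 mat) \<in> carrier_mat n n"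
  shows "(A - a \<cdot>\<^sub>m 1\<^sub>m n) * (A - b \<cdot>\<^sub>m 1\<^sub>m n) = (A - b \<cdot>\<^sub>m 1\<^sub>m n) * (A - a \<cdot>\<^sub>m 1\<^sub>m n)"
proof -
  define X where "X = A - a \<cdot>\<^sub>m 1\<^sub>m n"
  have X: "X \<in> carrier_mat n n" using A by (auto simp: X_def)
  have Y: "A - b \<cdot>\<^sub>m 1\<^sub>m n = X + (a - b) \<cdot>\<^sub>m 1\<^sub>m n"
    using A by (intro eq_matI) (auto simp: X_def algebra_simps)
  have "X * (X + (a - b) \<cdot>\<^sub>m 1\<^sub>m n) = X * X + (a - b) \<cdot>\<^sub>m X"
    using X by (simp add: mult_add_distrib_mat[of _ n n _ n] mult_smult_distrib[of _ n n _ n])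
  moreover have "(X + (a - b) \<cdot>\<^sub>m 1\<^sub>m n) * X = X * X + (a - b) \<cdot>\<^sub>m X"
    using X by (simp add: add_mult_distrib_mat[of _ n n _ _ n] mult_smult_assoc_mat[of _ n n _ n])
  ultimately show ?thesis by (simp add: Y X_def[symmetric])
qed

lemma lin_factor_prod_remove1:
  assumes A: "(A :: 'a::comm_ring_1 mat) \<in> carrier_mat n n" and x: "x \<in> set xs"
  shows "lin_factor_prod A xs = (A - x \<cdot>\<^sub>m 1\<^sub>m n) * lin_factor_prod A (remove1 x xs)"
  using x
proof (induct xs)
  case Nil
  then show ?case by simp
next
  case (Cons y xs)
  have dA: "dim_row A = n" using A by auto
  show ?case
  proof (cases "y = x")
    case True
    then show ?thesis by (simp add: lin_factor_prod_Cons dA)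
  next
    case False
    then have x: "x \<in> set xs" using Cons by auto
    define L where "L = lin_factor_prod A (remove1 x xs)"
    have L: "L \<in> carrier_mat n n" using A by (simp add: L_def)
    have X: "A - x \<cdot>\<^sub>m 1\<^sub>m n \<in> carrier_mat n n" and Y: "A - y \<cdot>\<^sub>m 1\<^sub>m n \<in> carrier_mat n n"
      using A by auto
    have "lin_factor_prod A (y # xs) = (A - y \<cdot>\<^sub>m 1\<^sub>m n) * ((A - x \<cdot>\<^sub>m 1\<^sub>m n) * L)"
      using Cons(1)[OF x] by (simp add: lin_factor_prod_Cons dA L_def)
    also have "\<dots> = ((A - y \<cdot>\<^sub>m 1\<^sub>m n) * (A - x \<cdot>\<^sub>m 1\<^sub>m n)) * L"
      using X Y L by (simp add: assoc_mult_mat[of _ n n _ n _ n])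
    also have "\<dots> = ((A - x \<cdot>\<^sub>m 1\<^sub>m n) * (A - y \<cdot>\<^sub>m 1\<^sub>m n)) * L"
      by (simp add: shift_mult_comm[OF A])
    also have "\<dots> = (A - x \<cdot>\<^sub>m 1\<^sub>m n) * ((A - y \<cdot>\<^sub>m 1\<^sub>m n) * L)"
      using X Y L by (simp add: assoc_mult_mat[of _ n n _ n _ n])
    finally show ?thesis using False by (simp add: lin_factor_prod_Cons dA L_def)
  qed
qed

lemma lin_factor_prod_perm:
  assumes A: "(A :: 'a::comm_ring_1 mat) \<in> carrier_mat n n" and "mset xs = mset ys"
  shows "lin_factor_prod A xs = lin_factor_prod A ys"
  using assms(2)
proof (induct xs arbitrary: ys)
  case Nil
  then show ?case by simp
next
  case (Cons x xs)
  have x: "x \<in> set ys" using Cons(2) by (metis list.set_intros(1) set_mset_mset)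
  have "mset xs = mset (remove1 x ys)"
    using Cons(2) by (simp add: x) (metis add_mset_remove_trivial)
  then have "lin_factor_prod A xs = lin_factor_prod A (remove1 x ys)" by (rule Cons(1))
  then show ?case
    using lin_factor_prod_remove1[OF A x] A by (simp add: lin_factor_prod_Cons)
qed

lemma lin_factor_prod_symmetric:
  assumes A: "(A :: 'a::comm_ring_1 mat) \<in> carrier_mat n n" and sA: "transpose_mat A = A"
  shows "transpose_mat (lin_factor_prod A cs) = lin_factor_prod A cs"
proof -
  have dA: "dim_row A = n" using A by auto
  have "transpose_mat (lin_factor_prod A cs) = lin_factor_prod A (rev cs)"
  proof (induct cs)
    case Nil
    then show ?case by (simp add: dA)
  next
    case (Cons c cs)
    have F: "A - c \<cdot>\<^sub>m 1\<^sub>m n \<in> carrier_mat n n" using A by auto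
    have tF: "transpose_mat (A - c \<cdot>\<^sub>m 1\<^sub>m n) = A - c \<cdot>\<^sub>m 1\<^sub>m n"
      using A sA by (intro eq_matI) (auto simp: mat_eq_iff)
    have "transpose_mat (lin_factor_prod A (c # cs))
        = transpose_mat (lin_factor_prod A cs) * transpose_mat (A - c \<cdot>\<^sub>m 1\<^sub>m n)"
      by (simp add: lin_factor_prod_Cons transpose_mult[OF F lin_factor_prod_carrier[OF A]] dA)
    also have "\<dots> = lin_factor_prod A (rev cs) * lin_factor_prod A [c]"
      using F by (simp add: Cons tF lin_factor_prod_Cons dA)
    also have "\<dots> = lin_factor_prod A (rev (c # cs))" by (simp add: lin_factor_prod_append[OF A])
    finally show ?case .
  qed
  also have "\<dots> = lin_factor_prod A cs" by (rule lin_factor_prod_perm[OF A]) simp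
  finally show ?thesis .
qed

lemma shift_mult_eigen:
  assumes A: "(A :: 'a::comm_ring_1 mat) \<in> carrier_mat n n" and X: "X \<in> carrier_mat n k"
    and e: "A * X = \<mu> \<cdot>\<^sub>m X"
  shows "(A - d \<cdot>\<^sub>m 1\<^sub>m n) * X = (\<mu> - d) \<cdot>\<^sub>m X"
  using A X e by (simp add: minus_mult_distrib_mat[of _ n n _ _ k]) (auto simp: mat_eq_iff algebra_simps)

lemma lin_factor_prod_eigen:
  assumes A: "(A :: 'a::comm_ring_1 mat) \<in> carrier_mat n n" and X: "X \<in> carrier_mat n k"
    and e: "A * X = \<mu> \<cdot>\<^sub>m X"
  shows "lin_factor_prod A ds * X = (\<Prod>d\<leftarrow>ds. \<mu> - d) \<cdot>\<^sub>m X"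
proof (induct ds)
  case Nil
  then show ?case using A X by auto
next
  case (Cons d ds)
  have dA: "dim_row A = n" using A by auto
  have F: "A - d \<cdot>\<^sub>m 1\<^sub>m n \<in> carrier_mat n n" using A by auto
  have "lin_factor_prod A (d # ds) * X = (A - d \<cdot>\<^sub>m 1\<^sub>m n) * (lin_factor_prod A ds * X)"
    using F A X by (simp add: lin_factor_prod_Cons dA assoc_mult_mat[of _ n n _ n _ k])
  also have "\<dots> = (\<Prod>d\<leftarrow>ds. \<mu> - d) \<cdot>\<^sub>m ((\<mu> - d) \<cdot>\<^sub>m X)"
    using F X by (simp add: Cons mult_smult_distrib[of _ n n _ k] shift_mult_eigen[OF A X e])
  finally show ?case by (simp add: smult_smult_mat mult.commute)
qed

section \<open>Spectral projections\<close>

text \<open>Lagrange interpolation: for an annihilating product with distinct roots this is the spectral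
  projection onto the \<mu>-eigenspace.\<close>
definition eigenproj :: "'a::field mat \<Rightarrow> 'a list \<Rightarrow> 'a \<Rightarrow> 'a mat" where
  "eigenproj A cs \<mu> = (1 / (\<Prod>d\<leftarrow>remove1 \<mu> cs. \<mu> - d)) \<cdot>\<^sub>m lin_factor_prod A (remove1 \<mu> cs)"

lemma mat_trace_smult: "X \<in> carrier_mat n n \<Longrightarrow> mat_trace (c \<cdot>\<^sub>m X) = c * mat_trace X"
  by (simp add: mat_trace_def sum_distrib_left)

lemma mat_trace_eigenproj_eq:
  assumes A: "A \<in> carrier_mat n n" and B: "B \<in> carrier_mat n n"
    and tr: "\<And>cs. mat_trace (lin_factor_prod A cs) = mat_trace (lin_factor_prod B cs)"
  shows "mat_trace (eigenproj A cs \<mu>) = mat_trace (eigenproj B cs \<mu>)"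
  using tr by (simp add: eigenproj_def mat_trace_smult[OF lin_factor_prod_carrier[OF A]]
      mat_trace_smult[OF lin_factor_prod_carrier[OF B]])

locale distinct_lin_factor_annihilated =
  fixes A :: "'a::field mat" and n :: nat and cs :: "'a list"
  assumes A: "A \<in> carrier_mat n n" and distinct: "distinct cs"
    and annihilated: "lin_factor_prod A cs = 0\<^sub>m n n"
begin

lemma eigenproj_carrier [simp]: "eigenproj A cs \<mu> \<in> carrier_mat n n"
  using A by (simp add: eigenproj_def)

lemma eigenproj_eigen:
  assumes mu: "\<mu> \<in> set cs"
  shows "A * eigenproj A cs \<mu> = \<mu> \<cdot>\<^sub>m eigenproj A cs \<mu>"
proof -
  define L where "L = lin_factor_prod A (remove1 \<mu> cs)"
  have L: "L \<in> carrier_mat n n" using A by (simp add: L_def)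
  have "A * L - (\<mu> \<cdot>\<^sub>m 1\<^sub>m n) * L = 0\<^sub>m n n"
    using lin_factor_prod_remove1[OF A mu] annihilated A L
    by (simp add: L_def minus_mult_distrib_mat[of _ n n _ _ n])
  then have "A * L = \<mu> \<cdot>\<^sub>m L"
    using A L by (auto simp: mat_eq_iff)
  then show ?thesis using A L
    by (simp add: eigenproj_def L_def[symmetric] mult_smult_distrib[of _ n n _ n] smult_smult_mat
        mult.commute)
qed

lemma eigenproj_fixes_eigen:
  assumes mu: "\<mu> \<in> set cs" and X: "X \<in> carrier_mat n k" and e: "A * X = \<mu> \<cdot>\<^sub>m X"
  shows "eigenproj A cs \<mu> * X = X"
proof -
  have nz: "(\<Prod>d\<leftarrow>remove1 \<mu> cs. \<mu> - d) \<noteq> 0"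
    using distinct by (auto simp: prod_list_zero_iff)
  have "eigenproj A cs \<mu> * X
      = (1 / (\<Prod>d\<leftarrow>remove1 \<mu> cs. \<mu> - d)) \<cdot>\<^sub>m (lin_factor_prod A (remove1 \<mu> cs) * X)"
    using A X by (simp add: eigenproj_def mult_smult_assoc_mat[of _ n n _ k])
  also have "\<dots> = X"
    using nz X by (simp add: lin_factor_prod_eigen[OF A X e] smult_smult_mat)
  finally show ?thesis .
qed

lemma eigenproj_idem: "\<mu> \<in> set cs \<Longrightarrow> eigenproj A cs \<mu> * eigenproj A cs \<mu> = eigenproj A cs \<mu>"
  by (rule eigenproj_fixes_eigen[OF _ eigenproj_carrier eigenproj_eigen])

lemma eigenproj_orthogonal:
  assumes mu: "\<mu> \<in> set cs" and nu: "\<nu> \<in> set cs" and ne: "\<nu> \<noteq> \<mu>"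
  shows "eigenproj A cs \<nu> * eigenproj A cs \<mu> = 0\<^sub>m n n"
proof -
  have z: "(\<Prod>d\<leftarrow>remove1 \<nu> cs. \<mu> - d) = 0"
    using mu ne by (auto simp: in_set_remove1 prod_list_zero_iff)
  have "lin_factor_prod A (remove1 \<nu> cs) * eigenproj A cs \<mu> = 0\<^sub>m n n"
    using lin_factor_prod_eigen[OF A eigenproj_carrier eigenproj_eigen[OF mu], of "remove1 \<nu> cs"]
    by (simp only: z zero_smult_mat[OF eigenproj_carrier])
  then show ?thesis using A
    by (simp add: eigenproj_def mult_smult_assoc_mat[of _ n n _ n])
qed

lemma eigenproj_symmetric:
  "transpose_mat A = A \<Longrightarrow> transpose_mat (eigenproj A cs \<mu>) = eigenproj A cs \<mu>"
  using lin_factor_prod_symmetric[OF A] by (simp add: eigenproj_def transpose_smult_mat)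

end

section \<open>Real symmetric matrices\<close>

lemma index_mult_mat_sum:
  assumes "A \<in> carrier_mat N N" "B \<in> carrier_mat N k" "i < N" "j < k"
  shows "(A * B) $$ (i,j) = (\<Sum>l<N. A $$ (i,l) * B $$ (l,j))"
  using assms by (simp add: scalar_prod_def atLeast0LessThan)

lemma sym_mat_index:
  assumes "X \<in> carrier_mat N N" "transpose_mat X = X" "i < N" "j < N"
  shows "X $$ (i,j) = X $$ (j,i)"
  using assms by (metis carrier_matD index_transpose_mat(1))

lemma sum_mult_mat_assoc:
  assumes X: "X \<in> carrier_mat N N" and Y: "Y \<in> carrier_mat N N" and i: "i < N"
  shows "(\<Sum>j<N. X $$ (i,j) * (\<Sum>k<N. Y $$ (j,k) * y k)) = (\<Sum>k<N. (X * Y) $$ (i,k) * (y k :: real))"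
proof -
  have "(\<Sum>j<N. X $$ (i,j) * (\<Sum>k<N. Y $$ (j,k) * y k)) = (\<Sum>k<N. \<Sum>j<N. X $$ (i,j) * Y $$ (j,k) * y k)"
    by (subst sum.swap) (simp add: sum_distrib_left mult.assoc)
  also have "\<dots> = (\<Sum>k<N. (X * Y) $$ (i,k) * y k)"
    by (intro sum.cong refl) (simp add: index_mult_mat_sum[OF X Y i] sum_distrib_right)
  finally show ?thesis .
qed

lemma mat_trace_add:
  "X \<in> carrier_mat N N \<Longrightarrow> Y \<in> carrier_mat N N \<Longrightarrow> mat_trace (X + Y) = mat_trace X + mat_trace Y"
  by (simp add: mat_trace_def sum.distrib)

lemma mat_trace_square_sym:
  assumes X: "X \<in> carrier_mat N N" and s: "transpose_mat X = X"
  shows "mat_trace (X * X) = (\<Sum>i<N. \<Sum>j<N. ((X::real mat) $$ (i,j))^2)"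
proof -
  have "mat_trace (X * X) = (\<Sum>i<N. \<Sum>j<N. X $$ (i,j) * X $$ (j,i))"
    using X by (simp add: mat_trace_def scalar_prod_def atLeast0LessThan)
  also have "\<dots> = (\<Sum>i<N. \<Sum>j<N. (X $$ (i,j))^2)"
    using sym_mat_index[OF X s] by (intro sum.cong refl) (simp add: power2_eq_square)
  finally show ?thesis .
qed

lemma sym_mat_eq_zero_of_trace_square:
  fixes X :: "real mat"
  assumes X: "X \<in> carrier_mat N N" and s: "transpose_mat X = X" and t: "mat_trace (X * X) = 0"
  shows "X = 0\<^sub>m N N"
proof (rule eq_matI)
  fix i j assume "i < dim_row (0\<^sub>m N N :: real mat)" "j < dim_col (0\<^sub>m N N :: real mat)"
  then have i: "i < N" and j: "j < N" by auto
  have "(\<Sum>i<N. \<Sum>j<N. (X $$ (i,j))^2) = 0" using mat_trace_square_sym[OF X s] t by simp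
  then have "\<forall>i\<in>{..<N}. (\<Sum>j<N. (X $$ (i,j))^2) = 0"
    using sum_nonneg_eq_0_iff[of "{..<N}" "\<lambda>i. \<Sum>j<N. (X $$ (i,j))^2"] by (simp add: sum_nonneg)
  then have "\<forall>j\<in>{..<N}. (X $$ (i,j))^2 = 0"
    using i sum_nonneg_eq_0_iff[of "{..<N}" "\<lambda>j. (X $$ (i,j))^2"] by simp
  then show "X $$ (i,j) = 0\<^sub>m N N $$ (i,j)" using i j by auto
qed (use X in auto)

lemma mat_trace_sym_idempotent_pos:
  fixes X :: "real mat"
  assumes X: "X \<in> carrier_mat N N" and s: "transpose_mat X = X" and idem: "X * X = X"
    and nz: "X \<noteq> 0\<^sub>m N N"
  shows "mat_trace X > 0"
proof -
  have "mat_trace (X * X) \<ge> 0"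
    unfolding mat_trace_square_sym[OF X s] by (intro sum_nonneg) simp
  then have "mat_trace X \<ge> 0" using idem by simp
  moreover have "mat_trace X \<noteq> 0" using sym_mat_eq_zero_of_trace_square[OF X s] idem nz by auto
  ultimately show ?thesis by simp
qed

lemma lin_factor_prod_eq_zero_of_trace:
  fixes A :: "real mat"
  assumes A: "A \<in> carrier_mat N N" and s: "transpose_mat A = A"
    and t: "mat_trace (lin_factor_prod A (cs @ cs)) = 0"
  shows "lin_factor_prod A cs = 0\<^sub>m N N"
  using sym_mat_eq_zero_of_trace_square[OF lin_factor_prod_carrier[OF A] lin_factor_prod_symmetric[OF A s]]
    t by (simp add: lin_factor_prod_append[OF A])

lemma sym_idempotent_quadratic_nonneg:
  assumes E: "E \<in> carrier_mat N N" and s: "transpose_mat E = E" and idem: "E * E = E"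
  shows "(\<Sum>i<N. y i * (\<Sum>k<N. E $$ (i,k) * y k)) \<ge> (0::real)"
proof -
  have "(\<Sum>i<N. y i * (\<Sum>k<N. E $$ (i,k) * y k))
      = (\<Sum>i<N. y i * (\<Sum>l<N. E $$ (i,l) * (\<Sum>k<N. E $$ (l,k) * y k)))"
    by (intro sum.cong refl) (simp add: sum_mult_mat_assoc[OF E E] idem)
  also have "\<dots> = (\<Sum>l<N. \<Sum>i<N. y i * E $$ (i,l) * (\<Sum>k<N. E $$ (l,k) * y k))"
    by (subst sum.swap) (simp add: sum_distrib_left mult.assoc)
  also have "\<dots> = (\<Sum>l<N. (\<Sum>k<N. E $$ (l,k) * y k)^2)"
  proof (intro sum.cong refl)
    fix l assume "l \<in> {..<N}"
    then show "(\<Sum>i<N. y i * E $$ (i,l) * (\<Sum>k<N. E $$ (l,k) * y k)) = (\<Sum>k<N. E $$ (l,k) * y k)^2"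
      using sym_mat_index[OF E s _] by (simp add: sum_distrib_right mult.commute power2_eq_square)
  qed
  also have "\<dots> \<ge> 0" by (intro sum_nonneg) simp
  finally show ?thesis .
qed

lemma sym_idempotent_rank_one_trace_le_one:
  fixes F :: "real mat"
  assumes F: "F \<in> carrier_mat N N" and s: "transpose_mat F = F" and idem: "F * F = F"
    and k0: "k0 < N" and col: "\<And>i k. i < N \<Longrightarrow> k < N \<Longrightarrow> F $$ (i,k) = t k * F $$ (i,k0)"
  shows "mat_trace F \<le> 1"
proof -
  define w where "w = F $$ (k0,k0)"
  define T where "T = (\<Sum>k<N. (t k)^2)"
  have row: "F $$ (k0,k) = t k * w" if "k < N" for k
    using col[OF k0 that] by (simp add: w_def)
  have col_k0: "F $$ (i,k0) = t i * w" if "i < N" for i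
    using row[OF that] sym_mat_index[OF F s k0 that] by simp
  have entry: "F $$ (i,k) = t i * t k * w" if "i < N" "k < N" for i k
    using col[OF that] col_k0[OF that(1)] by simp
  have "mat_trace F = w * T"
    using F entry by (simp add: mat_trace_def T_def sum_distrib_left power2_eq_square mult.commute)
  moreover have "w = w^2 * T"
  proof -
    have "w = (F * F) $$ (k0,k0)" using idem by (simp add: w_def)
    also have "\<dots> = (\<Sum>j<N. F $$ (k0,j) * F $$ (j,k0))" by (rule index_mult_mat_sum[OF F F k0 k0])
    also have "\<dots> = (\<Sum>j<N. (t j * w) * (t j * w))"
      using row col_k0 by (intro sum.cong refl) simp
    finally show ?thesis by (simp add: T_def sum_distrib_left power2_eq_square algebra_simps)
  qed
  then have "w = 0 \<or> w * T = 1"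
    by (metis mult.assoc mult_cancel_left1 power2_eq_square)
  ultimately show ?thesis by auto
qed

text \<open>Fixed vectors of F are determined by their coordinate sum, so F has rank at most one.\<close>
lemma sym_idempotent_trace_le_one:
  fixes F :: "real mat"
  assumes F: "F \<in> carrier_mat N N" and s: "transpose_mat F = F" and idem: "F * F = F"
    and fixed_sum_zero: "\<And>y. (\<And>i. i < N \<Longrightarrow> (\<Sum>j<N. F $$ (i,j) * y j) = y i) \<Longrightarrow>
        (\<Sum>i<N. y i) = 0 \<Longrightarrow> \<forall>i<N. y i = 0"
  shows "mat_trace F \<le> 1"
proof -
  define s where "s k = (\<Sum>i<N. F $$ (i,k))" for k
  have col_fixed: "(\<Sum>j<N. F $$ (i,j) * F $$ (j,k)) = F $$ (i,k)" if "i < N" "k < N" for i k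
    using index_mult_mat_sum[OF F F that] idem by simp
  show ?thesis
  proof (cases "\<forall>k<N. s k = 0")
    case True
    have "F $$ (i,k) = 0" if "i < N" "k < N" for i k
      using fixed_sum_zero[of "\<lambda>i. F $$ (i,k)"] col_fixed True that by (auto simp: s_def)
    then show ?thesis using F by (simp add: mat_trace_def)
  next
    case False
    then obtain k0 where k0: "k0 < N" and s0: "s k0 \<noteq> 0" by auto
    have "F $$ (i,k) = s k / s k0 * F $$ (i,k0)" if i: "i < N" and k: "k < N" for i k
    proof -
      define c where "c = s k / s k0"
      let ?y = "\<lambda>i. F $$ (i,k) - c * F $$ (i,k0)"
      have "(\<Sum>j<N. F $$ (i,j) * ?y j) = ?y i" if "i < N" for i
      proof -
        have "(\<Sum>j<N. F $$ (i,j) * ?y j)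
            = (\<Sum>j<N. F $$ (i,j) * F $$ (j,k)) - c * (\<Sum>j<N. F $$ (i,j) * F $$ (j,k0))"
          by (simp add: right_diff_distrib sum_subtractf sum_distrib_left mult.left_commute)
        then show ?thesis using col_fixed[OF that k] col_fixed[OF that k0] by simp
      qed
      moreover have "(\<Sum>i<N. ?y i) = s k - c * s k0"
        by (simp add: sum_subtractf sum_distrib_left s_def)
      then have "(\<Sum>i<N. ?y i) = 0"
        using s0 by (simp add: c_def)
      ultimately show ?thesis using fixed_sum_zero[of ?y] i by (auto simp: c_def)
    qed
    then show ?thesis by (rule sym_idempotent_rank_one_trace_le_one[OF F s idem k0])
  qed
qed

section \<open>The A_\<alpha> matrix of a graph\<close>

lemma A_alpha_carrier [simp]: "A_alpha a N E \<in> carrier_mat N N"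
  by (simp add: A_alpha_def deg_matrix_def adj_matrix_def)

lemma A_alpha_dims [simp]: "dim_row (A_alpha a N E) = N" "dim_col (A_alpha a N E) = N"
  by (simp_all add: A_alpha_def deg_matrix_def adj_matrix_def)

lemma A_alpha_index:
  "i < N \<Longrightarrow> j < N \<Longrightarrow> A_alpha a N E $$ (i,j)
    = (if i = j then a * real (degree N E i) else 0) + (1 - a) * (if E i j then 1 else 0)"
  by (simp add: A_alpha_def deg_matrix_def adj_matrix_def)

lemma A_alpha_symmetric: "simple_graph N E \<Longrightarrow> transpose_mat (A_alpha a N E) = A_alpha a N E"
  by (intro eq_matI) (auto simp: A_alpha_index simple_graph_def)

lemma degree_eq_sum: "real (degree N E i) = (\<Sum>j<N. if E i j then 1 else 0)"
proof -
  have "{j. j < N \<and> E i j} = {j\<in>{..<N}. E i j}" by auto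
  then show ?thesis by (simp add: degree_def sum.inter_filter[symmetric])
qed

lemma degree_le:
  assumes "simple_graph N E" "i < N"
  shows "degree N E i \<le> N - 1"
proof -
  have "{j. j < N \<and> E i j} \<subseteq> {..<N} - {i}" using assms by (auto simp: simple_graph_def)
  then have "degree N E i \<le> card ({..<N} - {i})" unfolding degree_def by (intro card_mono) auto
  then show ?thesis using assms by simp
qed

definition compl_degree :: "nat \<Rightarrow> (nat \<Rightarrow> nat \<Rightarrow> bool) \<Rightarrow> nat \<Rightarrow> real" where
  "compl_degree N E i = (\<Sum>j<N. if j \<noteq> i \<and> \<not> E i j then 1 else 0)"

lemma compl_degree_nonneg: "compl_degree N E i \<ge> 0"
  unfolding compl_degree_def by (rule sum_nonneg) auto

lemma sum_split_by_adjacency: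
  fixes x :: "nat \<Rightarrow> real"
  assumes "\<not> E i i" and i: "i < N"
  shows "(\<Sum>j<N. x j)
    = x i + (\<Sum>j<N. if E i j then x j else 0) + (\<Sum>j<N. if j \<noteq> i \<and> \<not> E i j then x j else 0)"
proof -
  have "(\<Sum>j<N. x j) = (\<Sum>j<N. (if j = i then x j else 0) + (if E i j then x j else 0)
      + (if j \<noteq> i \<and> \<not> E i j then x j else 0))"
    using assms(1) by (intro sum.cong) auto
  moreover have "(\<Sum>j<N. if j = i then x j else 0) = x i" using i by simp
  ultimately show ?thesis by (simp add: sum.distrib)
qed

lemma compl_degree_eq:
  assumes "simple_graph N E" "i < N"
  shows "compl_degree N E i = real N - 1 - real (degree N E i)"
  using sum_split_by_adjacency[of E i N "\<lambda>_. 1"] assms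
  by (simp add: compl_degree_def degree_eq_sum simple_graph_def)

definition dominating_vertices :: "nat \<Rightarrow> (nat \<Rightarrow> nat \<Rightarrow> bool) \<Rightarrow> nat set" where
  "dominating_vertices N E = {i. i < N \<and> (\<forall>j<N. j \<noteq> i \<longrightarrow> E i j)}"

lemma dominating_vertices_subset: "dominating_vertices N E \<subseteq> {..<N}"
  by (auto simp: dominating_vertices_def)

lemma degree_dominating:
  assumes "simple_graph N E" "i \<in> dominating_vertices N E"
  shows "degree N E i = N - 1"
proof -
  have "{j. j < N \<and> E i j} = {..<N} - {i}"
    using assms by (auto simp: simple_graph_def dominating_vertices_def)
  then show ?thesis using assms by (simp add: degree_def dominating_vertices_def)
qed

lemma dominating_of_degree:
  assumes g: "simple_graph N E" and i: "i < N" and d: "degree N E i = N - 1"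
  shows "i \<in> dominating_vertices N E"
proof -
  have sub: "{j. j < N \<and> E i j} \<subseteq> {..<N} - {i}" using g by (auto simp: simple_graph_def)
  have "card {j. j < N \<and> E i j} = card ({..<N} - {i})" using d i by (simp add: degree_def)
  then have "{j. j < N \<and> E i j} = {..<N} - {i}"
    using sub by (intro card_subset_eq) auto
  then show ?thesis using i by (auto simp: dominating_vertices_def)
qed

lemma compl_degree_ge_one:
  assumes i: "i < N" "i \<notin> dominating_vertices N E"
  shows "compl_degree N E i \<ge> 1"
proof -
  obtain j where "j < N" "j \<noteq> i" "\<not> E i j" using i by (auto simp: dominating_vertices_def)
  then have "(1::real) \<le> (if j \<noteq> i \<and> \<not> E i j then 1 else 0)" by simp
  also have "\<dots> \<le> compl_degree N E i" unfolding compl_degree_def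
    by (rule member_le_sum) (use \<open>j < N\<close> in auto)
  finally show ?thesis .
qed

lemma A_alpha_row_sum:
  assumes g: "simple_graph N E" and i: "i < N"
  shows "(\<Sum>j<N. A_alpha a N E $$ (i,j) * x j)
    = a * real (degree N E i) * x i + (1 - a) * (\<Sum>j<N. if E i j then x j else 0)"
proof -
  have "(\<Sum>j<N. A_alpha a N E $$ (i,j) * x j) = (\<Sum>j<N. (if j = i then a * real (degree N E i) * x i else 0)
      + (1 - a) * (if E i j then x j else 0))"
    using g by (intro sum.cong refl) (auto simp: A_alpha_index i simple_graph_def algebra_simps)
  then show ?thesis using i by (simp add: sum.distrib sum_distrib_left[symmetric])
qed

lemma sum_nonadjacent_products_ge:
  assumes g: "simple_graph N E"
  shows "(\<Sum>i<N. x i * (\<Sum>j<N. if j \<noteq> i \<and> \<not> E i j then x j else 0))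
    \<ge> - (\<Sum>i<N. compl_degree N E i * (x i)^2)"
proof -
  let ?nonadj = "\<lambda>i j. j \<noteq> i \<and> \<not> E i j"
  let ?S = "\<lambda>f. \<Sum>i<N. \<Sum>j<N. if ?nonadj i j then f i j else (0::real)"
  have sym: "?nonadj i j = ?nonadj j i" for i j
    using g by (auto simp: simple_graph_def)
  have sq_left: "?S (\<lambda>i j. (x i)^2) = (\<Sum>i<N. compl_degree N E i * (x i)^2)"
    unfolding compl_degree_def sum_distrib_right by (intro sum.cong) auto
  have "?S (\<lambda>i j. (x j)^2) = (\<Sum>j<N. \<Sum>i<N. if ?nonadj j i then (x j)^2 else 0)"
    by (subst sum.swap) (simp only: sym)
  then have sq_right: "?S (\<lambda>i j. (x j)^2) = (\<Sum>i<N. compl_degree N E i * (x i)^2)"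
    using sq_left by simp
  have prod: "?S (\<lambda>i j. x i * x j) = (\<Sum>i<N. x i * (\<Sum>j<N. if ?nonadj i j then x j else 0))"
    by (intro sum.cong refl) (simp add: sum_distrib_left if_distrib cong: if_cong)
  have "0 \<le> ?S (\<lambda>i j. (x i + x j)^2)" by (intro sum_nonneg) auto
  also have "?S (\<lambda>i j. (x i + x j)^2) = (\<Sum>i<N. \<Sum>j<N. (if ?nonadj i j then (x i)^2 else 0)
      + (if ?nonadj i j then (x j)^2 else 0) + 2 * (if ?nonadj i j then x i * x j else 0))"
    by (intro sum.cong refl) (auto simp: power2_eq_square algebra_simps)
  also have "\<dots> = ?S (\<lambda>i j. (x i)^2) + ?S (\<lambda>i j. (x j)^2) + 2 * ?S (\<lambda>i j. x i * x j)"
    by (simp add: sum.distrib sum_distrib_left)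
  finally show ?thesis unfolding sq_left sq_right prod by linarith
qed

section \<open>The eigenvalue \<alpha> N - 1 and dominating vertices\<close>

text \<open>With l = \<alpha> N - 1, the matrix l I - A_\<alpha> + (1 - \<alpha>) J is \<alpha> times the complement degree
  matrix plus 1 - \<alpha> times the complement adjacency matrix, and the quadratic form of the latter is
  bounded below by minus that of the complement degree matrix.\<close>
lemma A_alpha_quadratic_form_ge:
  fixes x :: "nat \<Rightarrow> real"
  assumes g: "simple_graph N E" and a: "a \<le> 1"
  defines "l \<equiv> a * real N - 1"
  shows "(\<Sum>i<N. x i * (l * x i - (\<Sum>j<N. A_alpha a N E $$ (i,j) * x j))) + (1 - a) * (\<Sum>i<N. x i)^2
    \<ge> (2 * a - 1) * (\<Sum>i<N. compl_degree N E i * (x i)^2)"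
proof -
  let ?Ax = "\<lambda>i. \<Sum>j<N. A_alpha a N E $$ (i,j) * x j"
  let ?R = "\<lambda>i. \<Sum>j<N. if j \<noteq> i \<and> \<not> E i j then x j else 0"
  have row: "x i * (l * x i - ?Ax i + (1 - a) * (\<Sum>i<N. x i))
      = a * (compl_degree N E i * (x i)^2) + (1 - a) * (x i * ?R i)" if i: "i < N" for i
  proof -
    have "\<not> E i i" using g by (simp add: simple_graph_def)
    from sum_split_by_adjacency[where E = E and i = i and N = N and x = x, OF this i] show ?thesis
      unfolding A_alpha_row_sum[OF g i]
      by (simp add: compl_degree_eq[OF g i] l_def power2_eq_square algebra_simps)
  qed
  have "(\<Sum>i<N. x i * (l * x i - ?Ax i)) + (1 - a) * (\<Sum>i<N. x i)^2
      = (\<Sum>i<N. x i * (l * x i - ?Ax i + (1 - a) * (\<Sum>i<N. x i)))"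
    by (simp add: distrib_left sum.distrib sum_distrib_right[symmetric] power2_eq_square
        mult.commute mult.left_commute)
  also have "\<dots> = a * (\<Sum>i<N. compl_degree N E i * (x i)^2) + (1 - a) * (\<Sum>i<N. x i * ?R i)"
    using row by (simp add: sum.distrib sum_distrib_left)
  also have "\<dots> \<ge> a * (\<Sum>i<N. compl_degree N E i * (x i)^2) - (1 - a) * (\<Sum>i<N. compl_degree N E i * (x i)^2)"
    using mult_left_mono[OF sum_nonadjacent_products_ge[OF g, of x], of "1 - a"] a by simp
  finally show ?thesis by (simp add: algebra_simps)
qed

lemma A_alpha_quadratic_form_vanishing:
  fixes x :: "nat \<Rightarrow> real"
  assumes g: "simple_graph N E" and a1: "1/2 < a" and a2: "a \<le> 1"
    and sum0: "(\<Sum>i<N. x i) = 0"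
    and form: "(\<Sum>i<N. x i * ((a * real N - 1) * x i - (\<Sum>j<N. A_alpha a N E $$ (i,j) * x j))) \<le> 0"
    and i: "i < N" "i \<notin> dominating_vertices N E"
  shows "x i = 0"
proof -
  let ?q = "\<lambda>i. compl_degree N E i * (x i)^2"
  have nonneg: "?q i \<ge> 0" for i using compl_degree_nonneg by simp
  have "(2 * a - 1) * (\<Sum>i<N. ?q i) \<le> 0"
    using A_alpha_quadratic_form_ge[OF g a2, of x] sum0 form by simp
  then have "(\<Sum>i<N. ?q i) \<le> 0" using a1 by (simp add: mult_le_0_iff)
  then have "?q i = 0"
    using nonneg sum_nonneg_eq_0_iff[of "{..<N}" ?q] i
    by (meson antisym finite_lessThan lessThan_iff sum_nonneg)
  then show ?thesis using compl_degree_ge_one[OF i] by simp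
qed

lemma A_alpha_eigenvector_sum_zero:
  fixes x :: "nat \<Rightarrow> real"
  assumes g: "simple_graph N E" and a: "a < 1" and u: "u \<in> dominating_vertices N E"
    and eigen: "(\<Sum>j<N. A_alpha a N E $$ (u,j) * x j) = (a * real N - 1) * x u"
  shows "(\<Sum>i<N. x i) = 0"
proof -
  have uN: "u < N" using u by (simp add: dominating_vertices_def)
  have "\<not> E u u" using g by (simp add: simple_graph_def)
  moreover have "(\<Sum>j<N. if j \<noteq> u \<and> \<not> E u j then x j else 0) = 0"
    using u by (intro sum.neutral) (auto simp: dominating_vertices_def)
  ultimately have S: "(\<Sum>j<N. x j) = x u + (\<Sum>j<N. if E u j then x j else 0)"
    using sum_split_by_adjacency[OF _ uN, of E x] by simp
  have "(a * real N - 1) * x u = a * real (N - 1) * x u + (1 - a) * (\<Sum>j<N. if E u j then x j else 0)"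
    using eigen A_alpha_row_sum[OF g uN, of a x] degree_dominating[OF g u] by simp
  then have "(1 - a) * (\<Sum>j<N. x j) = 0" using S uN by (simp add: of_nat_diff algebra_simps)
  then show ?thesis using a by simp
qed

text \<open>For a dominating p, summing X(p,p) - X(p,q) = 1 over the other dominating q, and using that
  the columns of X sum to zero and vanish off the dominating vertices, gives |D| X(p,p) = |D| - 1.\<close>
lemma trace_dominating_eigenspace:
  fixes X :: "real mat"
  assumes g: "simple_graph N E" and a1: "1/2 < a" and a2: "a < 1"
    and u: "u \<in> dominating_vertices N E"
    and sym: "\<And>i j. i < N \<Longrightarrow> j < N \<Longrightarrow> X $$ (i,j) = X $$ (j,i)"
    and eigen: "\<And>i k. i < N \<Longrightarrow> k < N \<Longrightarrow>
      (\<Sum>j<N. A_alpha a N E $$ (i,j) * X $$ (j,k)) = (a * real N - 1) * X $$ (i,k)"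
    and fixes_diff: "\<And>p q i. p \<in> dominating_vertices N E \<Longrightarrow> q \<in> dominating_vertices N E \<Longrightarrow>
      p \<noteq> q \<Longrightarrow> i < N \<Longrightarrow> X $$ (i,p) - X $$ (i,q) = (if i = p then 1 else 0) - (if i = q then 1 else 0)"
  shows "(\<Sum>i<N. X $$ (i,i)) = real (card (dominating_vertices N E)) - 1"
proof -
  let ?D = "dominating_vertices N E"
  let ?c = "real (card ?D)"
  have fin: "finite ?D" using finite_subset[OF dominating_vertices_subset] by blast
  have c1: "card ?D \<ge> 1" using fin u by (metis One_nat_def Suc_leI card_gt_0_iff empty_iff)
  have col_sum: "(\<Sum>i<N. X $$ (i,k)) = 0" if "k < N" for k
    by (rule A_alpha_eigenvector_sum_zero[OF g a2 u eigen]) (use u that in \<open>auto simp: dominating_vertices_def\<close>)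
  have col_supp: "X $$ (i,k) = 0" if "k < N" "i < N" "i \<notin> ?D" for i k
  proof (rule A_alpha_quadratic_form_vanishing[OF g a1 less_imp_le[OF a2] col_sum[OF that(1)] _ that(2,3)])
    show "(\<Sum>i<N. X $$ (i,k) * ((a * real N - 1) * X $$ (i,k) - (\<Sum>j<N. A_alpha a N E $$ (i,j) * X $$ (j,k)))) \<le> 0"
      using eigen[OF _ that(1)] by simp
  qed
  have diag: "?c * X $$ (p,p) = ?c - 1" if p: "p \<in> ?D" for p
  proof -
    have pN: "p < N" using p by (simp add: dominating_vertices_def)
    have "(\<Sum>q\<in>?D. X $$ (p,p) - X $$ (p,q)) = (\<Sum>q\<in>?D - {p}. 1)"
      using fixes_diff[OF p _ _ pN] fin p by (simp add: sum.If_cases Diff_eq Int_commute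
          sum.cong[of ?D ?D "\<lambda>q. X $$ (p,p) - X $$ (p,q)" "\<lambda>q. if q = p then 0 else 1"])
    also have "\<dots> = ?c - 1" using fin p c1 by (simp add: of_nat_diff)
    finally have e1: "(\<Sum>q\<in>?D. X $$ (p,p) - X $$ (p,q)) = ?c - 1" .
    have "(\<Sum>q\<in>?D. X $$ (p,q)) = (\<Sum>q\<in>?D. X $$ (q,p))"
      using pN by (intro sum.cong refl) (auto intro: sym simp: dominating_vertices_def)
    also have "\<dots> = (\<Sum>q<N. X $$ (q,p))"
      using dominating_vertices_subset col_supp[OF pN] by (intro sum.mono_neutral_left) auto
    finally have e2: "(\<Sum>q\<in>?D. X $$ (p,q)) = 0" using col_sum[OF pN] by simp
    show ?thesis using e1 e2 by (simp add: sum_subtractf)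
  qed
  have "(\<Sum>i<N. X $$ (i,i)) = (\<Sum>i\<in>?D. X $$ (i,i))"
    using dominating_vertices_subset col_supp by (intro sum.mono_neutral_right) auto
  also have "\<dots> = (\<Sum>i\<in>?D. (?c - 1) / ?c)"
    using diag c1 by (intro sum.cong refl) (simp add: field_simps)
  also have "\<dots> = ?c - 1" using c1 by simp
  finally show ?thesis .
qed

definition unit_diff_col :: "nat \<Rightarrow> nat \<Rightarrow> nat \<Rightarrow> real mat" where
  "unit_diff_col N p q = mat N 1 (\<lambda>(i,_). (if i = p then 1 else 0) - (if i = q then 1 else 0))"

lemma unit_diff_col_carrier [simp]: "unit_diff_col N p q \<in> carrier_mat N 1"
  by (simp add: unit_diff_col_def)

lemma mult_unit_diff_col:
  assumes X: "X \<in> carrier_mat N N" and p: "p < N" and q: "q < N" and pq: "p \<noteq> q" and i: "i < N"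
  shows "(X * unit_diff_col N p q) $$ (i,0) = X $$ (i,p) - X $$ (i,q)"
proof -
  have "(X * unit_diff_col N p q) $$ (i,0)
      = (\<Sum>l<N. (if l = p then X $$ (i,l) else 0) - (if l = q then X $$ (i,l) else 0))"
    using X i by (subst index_mult_mat_sum[OF X unit_diff_col_carrier]) (auto simp: unit_diff_col_def
        intro!: sum.cong)
  also have "\<dots> = X $$ (i,p) - X $$ (i,q)" using p q by (simp add: sum_subtractf)
  finally show ?thesis .
qed

lemma A_alpha_unit_diff_col_eigen:
  assumes g: "simple_graph N E" and p: "p \<in> dominating_vertices N E"
    and q: "q \<in> dominating_vertices N E" and pq: "p \<noteq> q"
  shows "A_alpha a N E * unit_diff_col N p q = (a * real N - 1) \<cdot>\<^sub>m unit_diff_col N p q"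
proof (rule eq_matI)
  fix i j assume "i < dim_row ((a * real N - 1) \<cdot>\<^sub>m unit_diff_col N p q)"
    "j < dim_col ((a * real N - 1) \<cdot>\<^sub>m unit_diff_col N p q)"
  then have i: "i < N" and j: "j = 0" by (auto simp: unit_diff_col_def)
  have pN: "p < N" and qN: "q < N" using p q by (auto simp: dominating_vertices_def)
  have N1: "N \<ge> 1" using pN by simp
  have "E p q" "E q p" "i \<noteq> p \<Longrightarrow> E i p" "i \<noteq> q \<Longrightarrow> E i q" "\<not> E p p" "\<not> E q q"
    using p q pq pN qN i g by (auto simp: dominating_vertices_def simple_graph_def)
  then have "A_alpha a N E $$ (i,p) - A_alpha a N E $$ (i,q) = ((a * real N - 1) \<cdot>\<^sub>m unit_diff_col N p q) $$ (i,0)"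
    using i pN qN pq N1 degree_dominating[OF g p] degree_dominating[OF g q]
    by (auto simp: A_alpha_index unit_diff_col_def of_nat_diff algebra_simps)
  then show "(A_alpha a N E * unit_diff_col N p q) $$ (i,j) = ((a * real N - 1) \<cdot>\<^sub>m unit_diff_col N p q) $$ (i,j)"
    unfolding j mult_unit_diff_col[OF A_alpha_carrier pN qN pq i] .
qed (auto simp: unit_diff_col_def)

lemma mat_trace_eigenproj_dominating:
  assumes ann: "distinct_lin_factor_annihilated (A_alpha a n E) n cs"
    and g: "simple_graph n E" and a1: "1/2 < a" and a2: "a < 1"
    and u: "u \<in> dominating_vertices n E" and l: "a * real n - 1 \<in> set cs"
  shows "mat_trace (eigenproj (A_alpha a n E) cs (a * real n - 1))
    = real (card (dominating_vertices n E)) - 1"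
proof -
  interpret distinct_lin_factor_annihilated "A_alpha a n E" n cs by (rule ann)
  let ?A = "A_alpha a n E"
  let ?l = "a * real n - 1"
  let ?X = "eigenproj ?A cs ?l"
  have X: "?X \<in> carrier_mat n n" by simp
  have eigen: "?A * ?X = ?l \<cdot>\<^sub>m ?X" by (rule eigenproj_eigen[OF l])
  have "(\<Sum>i<n. ?X $$ (i,i)) = real (card (dominating_vertices n E)) - 1"
  proof (rule trace_dominating_eigenspace[OF g a1 a2 u])
    show "?X $$ (i,j) = ?X $$ (j,i)" if "i < n" "j < n" for i j
      using sym_mat_index[OF X eigenproj_symmetric[OF A_alpha_symmetric[OF g]]] that
      by simp
    show "(\<Sum>j<n. A_alpha a n E $$ (i,j) * ?X $$ (j,k)) = ?l * ?X $$ (i,k)" if "i < n" "k < n" for i k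
      using index_mult_mat_sum[OF A_alpha_carrier[of a n E] X that] eigen X that by simp
    show "?X $$ (i,p) - ?X $$ (i,q) = (if i = p then 1 else 0) - (if i = q then 1 else 0)"
      if p: "p \<in> dominating_vertices n E" and q: "q \<in> dominating_vertices n E"
        and pq: "p \<noteq> q" and i: "i < n" for p q i
    proof -
      have pN: "p < n" and qN: "q < n" using p q by (auto simp: dominating_vertices_def)
      have "?X * unit_diff_col n p q = unit_diff_col n p q"
        using eigenproj_fixes_eigen[OF l unit_diff_col_carrier A_alpha_unit_diff_col_eigen[OF g p q pq]]
        by simp
      then show ?thesis using mult_unit_diff_col[OF X pN qN pq i] i by (simp add: unit_diff_col_def)
    qed
  qed
  then show ?thesis using carrier_matD[OF X] by (simp add: mat_trace_def)
qed

section \<open>Degrees from the spectrum\<close>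

lemma mat_trace_A_alpha:
  assumes "simple_graph N E"
  shows "mat_trace (A_alpha a N E) = a * (\<Sum>i<N. real (degree N E i))"
  using assms by (simp add: mat_trace_def A_alpha_index sum_distrib_left simple_graph_def)

lemma mat_trace_A_alpha_square:
  assumes g: "simple_graph N E"
  shows "mat_trace (A_alpha a N E * A_alpha a N E)
    = a^2 * (\<Sum>i<N. (real (degree N E i))^2) + (1 - a)^2 * (\<Sum>i<N. real (degree N E i))"
proof -
  let ?A = "A_alpha a N E"
  have row: "(\<Sum>j<N. ?A $$ (i,j) * ?A $$ (j,i))
      = a^2 * (real (degree N E i))^2 + (1 - a)^2 * (\<Sum>j<N. if E i j then 1 else 0)" if i: "i < N" for i
  proof -
    have "(\<Sum>j<N. ?A $$ (i,j) * ?A $$ (j,i)) = (\<Sum>j<N. (if j = i then a^2 * (real (degree N E i))^2 else 0)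
        + (1 - a)^2 * (if E i j then 1 else 0))"
      using g i by (intro sum.cong refl) (auto simp: A_alpha_index simple_graph_def power2_eq_square)
    then show ?thesis using i by (simp add: sum.distrib sum_distrib_left[symmetric])
  qed
  have "mat_trace (?A * ?A) = (\<Sum>i<N. \<Sum>j<N. ?A $$ (i,j) * ?A $$ (j,i))"
    by (simp add: mat_trace_def scalar_prod_def atLeast0LessThan)
  also have "\<dots> = a^2 * (\<Sum>i<N. (real (degree N E i))^2) + (1 - a)^2 * (\<Sum>i<N. real (degree N E i))"
    by (simp add: row sum.distrib sum_distrib_left degree_eq_sum)
  finally show ?thesis .
qed

lemma cospectral_A_alpha_degree_sums:
  assumes g: "simple_graph N E" and g': "simple_graph N E'" and a: "a \<noteq> 0"
    and tr: "\<And>cs. mat_trace (lin_factor_prod (A_alpha a N E') cs) = mat_trace (lin_factor_prod (A_alpha a N E) cs)"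
  shows "(\<Sum>i<N. real (degree N E' i)) = (\<Sum>i<N. real (degree N E i))"
    and "(\<Sum>i<N. (real (degree N E' i))^2) = (\<Sum>i<N. (real (degree N E i))^2)"
proof -
  have lin1: "lin_factor_prod X [0] = X" and lin2: "lin_factor_prod X [0, 0] = X * X"
    if X: "X \<in> carrier_mat N N" for X :: "real mat"
  proof -
    have "X - 0 \<cdot>\<^sub>m 1\<^sub>m N = X" using X by (intro eq_matI) auto
    then show "lin_factor_prod X [0] = X" "lin_factor_prod X [0, 0] = X * X"
      using X by (auto simp: lin_factor_prod_Cons right_mult_one_mat[of _ N N] carrier_matD)
  qed
  show sum1: "(\<Sum>i<N. real (degree N E' i)) = (\<Sum>i<N. real (degree N E i))"
    using tr[of "[0]"] a by (simp add: lin1 mat_trace_A_alpha[OF g] mat_trace_A_alpha[OF g'])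
  show "(\<Sum>i<N. (real (degree N E' i))^2) = (\<Sum>i<N. (real (degree N E i))^2)"
    using tr[of "[0, 0]"] a
    by (simp add: lin2 mat_trace_A_alpha_square[OF g] mat_trace_A_alpha_square[OF g'] sum1)
qed

lemma isolated_vertex_root:
  assumes ann: "distinct_lin_factor_annihilated (A_alpha a N E) N cs"
    and g: "simple_graph N E" and i: "i < N" and isolated: "\<And>j. \<not> E i j"
  shows "0 \<in> set cs"
proof -
  interpret distinct_lin_factor_annihilated "A_alpha a N E" N cs by (rule ann)
  define U where "U = mat N 1 (\<lambda>(j,_). if j = i then 1 else (0::real))"
  have U: "U \<in> carrier_mat N 1" by (simp add: U_def)
  have "A_alpha a N E * U = 0 \<cdot>\<^sub>m U"
  proof (rule eq_matI)
    fix k l assume "k < dim_row (0 \<cdot>\<^sub>m U)" "l < dim_col (0 \<cdot>\<^sub>m U)"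
    then have k: "k < N" and l: "l = 0" by (auto simp: U_def)
    have "\<not> E k i" using isolated g unfolding simple_graph_def by blast
    moreover have "degree N E i = 0" using isolated by (simp add: degree_def)
    ultimately have "A_alpha a N E $$ (k,i) = 0" using k i by (auto simp: A_alpha_index)
    moreover have "(A_alpha a N E * U) $$ (k,0) = (\<Sum>j<N. A_alpha a N E $$ (k,j) * (if j = i then 1 else 0))"
      using k by (subst index_mult_mat_sum[OF A_alpha_carrier U k]) (auto simp: U_def)
    ultimately show "(A_alpha a N E * U) $$ (k,l) = (0 \<cdot>\<^sub>m U) $$ (k,l)"
      using k l i by (simp add: U_def if_distrib cong: if_cong)
  qed (auto simp: U_def)
  from lin_factor_prod_eigen[OF A_alpha_carrier U this, of cs]
  have "(\<Prod>d\<leftarrow>cs. 0 - d) \<cdot>\<^sub>m U = 0\<^sub>m N 1" using annihilated U by simp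
  then have "(\<Prod>d\<leftarrow>cs. 0 - d) = 0" using i by (auto simp: U_def mat_eq_iff)
  then show ?thesis by (auto simp: prod_list_zero_iff)
qed

lemma sum_eq_bound_imp_eq:
  fixes d :: "nat \<Rightarrow> real"
  assumes le: "\<And>i. i < N \<Longrightarrow> d i \<le> b" and s: "(\<Sum>i<N. d i) = real N * b" and i: "i < N"
  shows "d i = b"
proof -
  have "(\<Sum>i<N. b - d i) = 0" using s by (simp add: sum_subtractf)
  then show ?thesis using sum_nonneg_eq_0_iff[of "{..<N}" "\<lambda>i. b - d i"] le i by simp
qed

section \<open>Recognising K_m \<or> nK_1\<close>

text \<open>Every vertex outside D is adjacent to all of D, so its degree is at least |D|; the degree sum
  forces equality, hence it has no other neighbours.\<close>
lemma adjacency_of_dominating_set: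
  assumes g: "simple_graph (m + n) E" and D: "D \<subseteq> dominating_vertices (m + n) E"
    and cD: "card D = m"
    and deg_sum: "(\<Sum>i<m+n. real (degree (m+n) E i)) = real m * (real (m+n) - 1) + real n * real m"
    and i: "i < m + n" and j: "j < m + n"
  shows "E i j \<longleftrightarrow> i \<noteq> j \<and> (i \<in> D \<or> j \<in> D)"
proof -
  let ?N = "m + n" and ?R = "{..<m+n} - D"
  have DN: "D \<subseteq> {..<?N}" using D dominating_vertices_subset by blast
  have fD: "finite D" using DN finite_subset by blast
  have cR: "card ?R = n" using DN cD fD by (simp add: card_Diff_subset)
  have symE: "E k l \<Longrightarrow> E l k" and irr: "\<not> E k k" for k l
    using g by (auto simp: simple_graph_def)
  have D_nbrs: "D \<subseteq> {j. j < ?N \<and> E k j}" if k: "k \<in> ?R" for k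
  proof
    fix x assume x: "x \<in> D"
    then have "E x k" using D k by (auto simp: dominating_vertices_def)
    then show "x \<in> {j. j < ?N \<and> E k j}" using symE DN x by auto
  qed
  then have deg_R: "real (degree ?N E k) - real m \<ge> 0" if "k \<in> ?R" for k
    using card_mono[OF _ D_nbrs[OF that]] cD that by (simp add: degree_def)
  have "(\<Sum>k<?N. real (degree ?N E k)) = (\<Sum>k\<in>D. real (degree ?N E k)) + (\<Sum>k\<in>?R. real (degree ?N E k))"
    using DN fD by (metis (no_types, lifting) finite_lessThan sum.subset_diff add.commute)
  moreover have "(\<Sum>k\<in>D. real (degree ?N E k)) = real m * (real ?N - 1)"
    using degree_dominating[OF g] D cD by (cases "m = 0") (auto simp: of_nat_diff subset_iff)
  ultimately have "(\<Sum>k\<in>?R. real (degree ?N E k) - real m) = 0"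
    using deg_sum cR by (simp add: sum_subtractf)
  then have "degree ?N E k = m" if "k \<in> ?R" for k
    using sum_nonneg_eq_0_iff[of ?R "\<lambda>k. real (degree ?N E k) - real m"] deg_R that by simp
  then have nbrs_R: "{j. j < ?N \<and> E k j} = D" if "k \<in> ?R" for k
    using D_nbrs[OF that] that cD by (intro card_subset_eq[symmetric]) (auto simp: degree_def)
  show ?thesis
  proof (cases "i \<in> D")
    case True
    then show ?thesis using D j irr by (auto simp: dominating_vertices_def)
  next
    case False
    then show ?thesis using nbrs_R[of i] i j irr by auto
  qed
qed

lemma graph_iso_complete_split_of_adjacency:
  assumes DN: "D \<subseteq> {..<m+n}" and cD: "card D = m"
    and adj: "\<And>i j. i < m + n \<Longrightarrow> j < m + n \<Longrightarrow> E i j \<longleftrightarrow> i \<noteq> j \<and> (i \<in> D \<or> j \<in> D)"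
  shows "graph_iso (m + n) E (m + n) (complete_split m n)"
proof -
  let ?N = "m + n" and ?R = "{..<m+n} - D"
  have fD: "finite D" using DN finite_subset by blast
  have cR: "card ?R = n" using DN cD fD by (simp add: card_Diff_subset)
  obtain f1 where f1: "bij_betw f1 D {..<m}"
    using finite_same_card_bij[OF fD finite_lessThan] cD by auto
  obtain f2 where f2: "bij_betw f2 ?R {m..<?N}"
    using finite_same_card_bij[of ?R "{m..<?N}"] cR by auto
  define f where "f x = (if x \<in> D then f1 x else f2 x)" for x
  have b1: "bij_betw f D {..<m}" using f1 by (rule bij_betw_cong[THEN iffD1, rotated]) (simp add: f_def)
  have b2: "bij_betw f ?R {m..<?N}" using f2 by (rule bij_betw_cong[THEN iffD1, rotated]) (simp add: f_def)
  have "bij_betw f (D \<union> ?R) ({..<m} \<union> {m..<?N})"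
    by (rule bij_betw_combine[OF b1 b2]) auto
  moreover have "D \<union> ?R = {0..<?N}" "{..<m} \<union> {m..<?N} = {0..<?N}" using DN by auto
  ultimately have bf: "bij_betw f {0..<?N} {0..<?N}" by simp
  have f_lt: "f i < ?N" if "i < ?N" for i using bij_betwE[OF bf] that by simp
  have f_clique: "f i < m \<longleftrightarrow> i \<in> D" if "i < ?N" for i
  proof (cases "i \<in> D")
    case False
    then have "f i \<in> {m..<?N}" using bij_betwE[OF b2] that by blast
    then show ?thesis using False by simp
  qed (use bij_betwE[OF b1] in auto)
  have f_inj: "f i = f j \<longleftrightarrow> i = j" if "i < ?N" "j < ?N" for i j
    using inj_onD[OF bij_betw_imp_inj_on[OF bf], of i j] that by auto
  show ?thesis unfolding graph_iso_def
    using bf adj f_lt f_clique f_inj by (auto simp: complete_split_def)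
qed

lemma graph_iso_complete_split_of_dominating:
  assumes g: "simple_graph (m + n) E" and D: "D \<subseteq> dominating_vertices (m + n) E"
    and cD: "card D = m"
    and deg_sum: "(\<Sum>i<m+n. real (degree (m+n) E i)) = real m * (real (m+n) - 1) + real n * real m"
  shows "graph_iso (m + n) E (m + n) (complete_split m n)"
  using graph_iso_complete_split_of_adjacency[OF _ cD adjacency_of_dominating_set[OF g D cD deg_sum]]
    D dominating_vertices_subset by blast

section \<open>The spectrum of K_m \<or> nK_1\<close>

text \<open>The block pattern of A_\<alpha>(K_m \<or> nK_1); it is closed under products.\<close>
definition split_pattern_mat :: "nat \<Rightarrow> nat \<Rightarrow> real \<Rightarrow> real \<Rightarrow> real \<Rightarrow> real \<Rightarrow> real \<Rightarrow> real \<Rightarrow> real mat" where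
  "split_pattern_mat m n a b c d e f = mat (m+n) (m+n) (\<lambda>(i,j).
     if i < m then (if j < m then (if i = j then a else b) else c)
     else (if j < m then d else (if i = j then e else f)))"

lemma split_pattern_mat_carrier [simp]: "split_pattern_mat m n a b c d e f \<in> carrier_mat (m+n) (m+n)"
  by (simp add: split_pattern_mat_def)

lemma split_pattern_mat_dims [simp]:
  "dim_row (split_pattern_mat m n a b c d e f) = m + n" "dim_col (split_pattern_mat m n a b c d e f) = m + n"
  by (simp_all add: split_pattern_mat_def)

lemma split_pattern_mat_index:
  "i < m + n \<Longrightarrow> j < m + n \<Longrightarrow> split_pattern_mat m n a b c d e f $$ (i,j) =
    (if i < m then (if j < m then (if i = j then a else b) else c)
     else (if j < m then d else (if i = j then e else f)))"
  by (simp add: split_pattern_mat_def)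

lemma sum_delta_mult_delta:
  assumes "finite S"
  shows "(\<Sum>k\<in>S. (if k = i then p1 else p0) * (if k = j then q1 else q0)) =
    real (card S) * p0 * q0 + (if i \<in> S then (p1 - p0) * q0 else 0) + (if j \<in> S then p0 * (q1 - q0) else 0)
    + (if i = j \<and> i \<in> S then (p1 - p0) * (q1 - q0) else (0::real))"
proof -
  have "(\<Sum>k\<in>S. (if k = i then p1 else p0) * (if k = j then q1 else q0)) =
      (\<Sum>k\<in>S. p0 * q0 + (if k = i then (p1 - p0) * q0 else 0) + (if k = j then p0 * (q1 - q0) else 0)
        + (if k = i then (if i = j then (p1 - p0) * (q1 - q0) else 0) else 0))"
    by (intro sum.cong) (auto simp: algebra_simps)
  then show ?thesis using assms by (auto simp: sum.distrib)
qed

lemma split_pattern_mat_mult: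
  "split_pattern_mat m n a1 b1 c1 d1 e1 f1 * split_pattern_mat m n a2 b2 c2 d2 e2 f2 =
   split_pattern_mat m n (a1*a2 + (real m - 1)*b1*b2 + real n*c1*d2)
            (a1*b2 + b1*a2 + (real m - 2)*b1*b2 + real n*c1*d2)
            ((a1 + (real m - 1)*b1)*c2 + c1*(e2 + (real n - 1)*f2))
            (d1*(a2 + (real m - 1)*b2) + (e1 + (real n - 1)*f1)*d2)
            (real m*d1*c2 + e1*e2 + (real n - 1)*f1*f2)
            (real m*d1*c2 + e1*f2 + f1*e2 + (real n - 2)*f1*f2)"
  (is "?A * ?B = ?C")
proof (rule eq_matI)
  fix i j assume "i < dim_row ?C" "j < dim_col ?C"
  then have i: "i < m + n" and j: "j < m + n" by auto
  have A_left: "?A $$ (i,k) = (if k = i then a1 else if i < m then b1 else d1)" if "k < m" for k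
    using i that by (auto simp: split_pattern_mat_index)
  have A_right: "?A $$ (i,k) = (if k = i then e1 else if i < m then c1 else f1)" if "k \<in> {m..<m+n}" for k
    using i that by (auto simp: split_pattern_mat_index)
  have B_left: "?B $$ (k,j) = (if k = j then a2 else if j < m then b2 else c2)" if "k < m" for k
    using j that by (auto simp: split_pattern_mat_index)
  have B_right: "?B $$ (k,j) = (if k = j then e2 else if j < m then d2 else f2)" if "k \<in> {m..<m+n}" for k
    using j that by (auto simp: split_pattern_mat_index)
  have "(?A * ?B) $$ (i,j) = (\<Sum>k\<in>{0..<m+n}. ?A $$ (i,k) * ?B $$ (k,j))"
    using i j by (simp add: scalar_prod_def)
  also have "\<dots> = (\<Sum>k<m. ?A $$ (i,k) * ?B $$ (k,j)) + (\<Sum>k\<in>{m..<m+n}. ?A $$ (i,k) * ?B $$ (k,j))"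
    unfolding lessThan_atLeast0 by (rule sum.atLeastLessThan_concat[symmetric]) auto
  also have "\<dots> = (\<Sum>k<m. (if k = i then a1 else if i < m then b1 else d1) * (if k = j then a2 else if j < m then b2 else c2))
      + (\<Sum>k\<in>{m..<m+n}. (if k = i then e1 else if i < m then c1 else f1) * (if k = j then e2 else if j < m then d2 else f2))"
    using A_left A_right B_left B_right by (intro arg_cong2[where f = "(+)"] sum.cong) auto
  also have "\<dots> = ?C $$ (i,j)"
    unfolding sum_delta_mult_delta[OF finite_lessThan] sum_delta_mult_delta[OF finite_atLeastLessThan]
    using i j by (auto simp: split_pattern_mat_index algebra_simps)
  finally show "(?A * ?B) $$ (i,j) = ?C $$ (i,j)" .
qed auto

lemma split_pattern_mat_eqI:
  "a = a' \<Longrightarrow> b = b' \<Longrightarrow> c = c' \<Longrightarrow> d = d' \<Longrightarrow> e = e' \<Longrightarrow> f = f' \<Longrightarrow>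
    split_pattern_mat m n a b c d e f = split_pattern_mat m n a' b' c' d' e' f'"
  by simp

lemma split_pattern_mat_shift:
  "split_pattern_mat m n a b c d e f - x \<cdot>\<^sub>m 1\<^sub>m (m+n) = split_pattern_mat m n (a - x) b c d (e - x) f"
  by (intro eq_matI) (auto simp: split_pattern_mat_index)

lemma split_pattern_mat_smult:
  "x \<cdot>\<^sub>m split_pattern_mat m n a b c d e f = split_pattern_mat m n (x*a) (x*b) (x*c) (x*d) (x*e) (x*f)"
  by (intro eq_matI) (auto simp: split_pattern_mat_index)

lemma split_pattern_mat_zero: "split_pattern_mat m n 0 0 0 0 0 0 = 0\<^sub>m (m+n) (m+n)"
  by (intro eq_matI) (auto simp: split_pattern_mat_index)

lemma complete_split_simple_graph: "simple_graph (m+n) (complete_split m n)"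
  by (auto simp: simple_graph_def complete_split_def)

lemma degree_complete_split:
  assumes "i < m + n"
  shows "degree (m+n) (complete_split m n) i = (if i < m then m + n - 1 else m)"
proof -
  have "{j. j < m+n \<and> complete_split m n i j} = (if i < m then {..<m+n} - {i} else {..<m})"
    using assms by (auto simp: complete_split_def)
  then show ?thesis using assms by (simp add: degree_def)
qed

lemma complete_split_degree_sums:
  assumes m: "1 \<le> m"
  shows "(\<Sum>i<m+n. real (degree (m+n) (complete_split m n) i)) = real m * (real (m+n) - 1) + real n * real m"
    and "(\<Sum>i<m+n. (real (degree (m+n) (complete_split m n) i))^2)
      = real m * (real (m+n) - 1)^2 + real n * (real m)^2"
proof -
  have split: "(\<Sum>i<m+n. g i) = (\<Sum>i<m. g i) + (\<Sum>i\<in>{m..<m+n}. g i)" for g :: "nat \<Rightarrow> real"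
    unfolding lessThan_atLeast0 by (rule sum.atLeastLessThan_concat[symmetric]) auto
  have "real (degree (m+n) (complete_split m n) i) = (if i < m then real (m+n) - 1 else real m)"
    if "i < m + n" for i
    using m that by (simp add: degree_complete_split of_nat_diff)
  then show "(\<Sum>i<m+n. real (degree (m+n) (complete_split m n) i)) = real m * (real (m+n) - 1) + real n * real m"
    and "(\<Sum>i<m+n. (real (degree (m+n) (complete_split m n) i))^2)
      = real m * (real (m+n) - 1)^2 + real n * (real m)^2"
    by (simp_all add: split)
qed

lemma A_alpha_complete_split:
  assumes "1 \<le> m"
  shows "A_alpha a (m+n) (complete_split m n)
    = split_pattern_mat m n (a * (real m + real n - 1)) (1 - a) (1 - a) (1 - a) (a * real m) 0"
  by (rule eq_matI) (use assms in \<open>auto simp: A_alpha_index split_pattern_mat_index degree_complete_split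
      complete_split_def of_nat_diff\<close>)

lemma dominating_vertices_complete_split:
  assumes "2 \<le> n"
  shows "dominating_vertices (m+n) (complete_split m n) = {..<m}"
proof (intro subset_antisym subsetI)
  fix i assume i: "i \<in> dominating_vertices (m+n) (complete_split m n)"
  show "i \<in> {..<m}"
  proof (rule ccontr)
    assume "i \<notin> {..<m}"
    define j where "j = (if i = m then m + 1 else m)"
    have "j < m + n" "j \<noteq> i" using assms i \<open>i \<notin> {..<m}\<close> by (auto simp: j_def dominating_vertices_def)
    then have "complete_split m n i j" using i by (simp add: dominating_vertices_def)
    then show False using \<open>i \<notin> {..<m}\<close> by (simp add: complete_split_def j_def split: if_splits)
  qed
qed (auto simp: dominating_vertices_def complete_split_def)

lemma split_pattern_mat_shift_mult:
  "(split_pattern_mat m n p1 p2 p3 p4 p5 p6 - x \<cdot>\<^sub>m 1\<^sub>m (m+n)) * (split_pattern_mat m n p1 p2 p3 p4 p5 p6 - y \<cdot>\<^sub>m 1\<^sub>m (m+n))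
  = split_pattern_mat m n (p1*p1 + (real m - 1)*p2*p2 + real n*p3*p4 - (x + y) * p1 + x * y)
      (p1*p2 + p2*p1 + (real m - 2)*p2*p2 + real n*p3*p4 - (x + y) * p2)
      ((p1 + (real m - 1)*p2)*p3 + p3*(p5 + (real n - 1)*p6) - (x + y) * p3)
      (p4*(p1 + (real m - 1)*p2) + (p5 + (real n - 1)*p6)*p4 - (x + y) * p4)
      (real m*p4*p3 + p5*p5 + (real n - 1)*p6*p6 - (x + y) * p5 + x * y)
      (real m*p4*p3 + p5*p6 + p6*p5 + (real n - 2)*p6*p6 - (x + y) * p6)"
  unfolding split_pattern_mat_shift split_pattern_mat_mult
  by (rule split_pattern_mat_eqI) (simp_all add: algebra_simps)

text \<open>For n \<ge> 2 the A_\<alpha>-eigenvalues of K_m \<or> nK_1 are l0 = \<alpha>(m + n) - 1, \<alpha> m, and the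
  eigenvalues th1 > th2 of the quotient matrix [[q11, q12], [q21, q22]] of the partition into clique
  and independent set.\<close>
locale complete_split_spectrum =
  fixes m n :: nat and a :: real
  assumes m1: "1 \<le> m" and n2: "2 \<le> n" and a1: "1/2 < a" and a2: "a < 1"
begin

definition "l0 = a * real (m + n) - 1"
definition "q11 = a * (real m + real n - 1) + (1 - a) * (real m - 1)"
definition "q12 = (1 - a) * real n"
definition "q21 = (1 - a) * real m"
definition "q22 = a * real m"
definition "tr_q = q11 + q22"
definition "det_q = q11 * q22 - q12 * q21"
definition "th1 = (tr_q + sqrt (tr_q^2 - 4 * det_q)) / 2"
definition "th2 = (tr_q - sqrt (tr_q^2 - 4 * det_q)) / 2"
definition "M = A_alpha a (m+n) (complete_split m n)"
definition "eigenvalues = [l0, a * real m, th1, th2]"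

lemma q12_q21_pos: "q12 * q21 > 0"
  using m1 n2 a2 by (simp add: q12_def q21_def)

lemma discriminant_pos: "tr_q^2 - 4 * det_q > 0"
proof -
  have "tr_q^2 - 4 * det_q = (q11 - q22)^2 + 4 * (q12 * q21)"
    by (simp add: tr_q_def det_q_def power2_eq_square algebra_simps)
  then show ?thesis using q12_q21_pos by (metis add_nonneg_pos mult_pos_pos zero_le_power2 zero_less_numeral)
qed

lemma th_sum: "th1 + th2 = tr_q"
  by (simp add: th1_def th2_def field_simps)

lemma th_prod: "th1 * th2 = det_q"
proof -
  have "th1 * th2 = (tr_q^2 - (sqrt (tr_q^2 - 4 * det_q))^2) / 4"
    unfolding th1_def th2_def by (simp add: field_simps power2_eq_square)
  then show ?thesis using discriminant_pos by simp
qed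

lemma between_th:
  assumes "(th1 - x) * (th2 - x) < 0"
  shows "th2 < x" "x < th1"
proof -
  have "th2 < th1" using discriminant_pos by (simp add: th1_def th2_def)
  have "th2 < x \<and> x < th1"
  proof (rule ccontr)
    assume "\<not> (th2 < x \<and> x < th1)"
    then have "(th1 - x) * (th2 - x) \<ge> 0"
      using \<open>th2 < th1\<close> by (auto intro: mult_nonneg_nonneg mult_nonpos_nonpos)
    then show False using assms by simp
  qed
  then show "th2 < x" "x < th1" by auto
qed

lemma eigenvalues_order: "0 < th2" "th2 < a * real m" "a * real m < l0" "l0 < th1"
proof -
  have "(th1 - l0) * (th2 - l0) = l0^2 - (th1 + th2) * l0 + th1 * th2"
    by (simp add: power2_eq_square algebra_simps)
  also have "\<dots> = (1 - a) * real m * (1 - real n)"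
    unfolding th_sum th_prod
    by (simp add: l0_def tr_q_def det_q_def q11_def q12_def q21_def q22_def power2_eq_square algebra_simps)
  also have "\<dots> < 0" using m1 n2 a2 by (simp add: mult_pos_neg)
  finally show "l0 < th1" by (rule between_th)
  have "(th1 - a * real m) * (th2 - a * real m) = (a * real m)^2 - (th1 + th2) * (a * real m) + th1 * th2"
    by (simp add: power2_eq_square algebra_simps)
  also have "\<dots> = - (q12 * q21)"
    unfolding th_sum th_prod by (simp add: tr_q_def det_q_def q22_def power2_eq_square algebra_simps)
  finally show th2_am: "th2 < a * real m" using q12_q21_pos by (intro between_th) simp
  have "a * real n \<ge> a * 2" using n2 a1 by (intro mult_left_mono) auto
  then have "a * real n > 1" using a1 by linarith
  then show am_l0: "a * real m < l0" using a1 by (simp add: l0_def algebra_simps)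
  have "q11 = a * real n + (real m - 1)" by (simp add: q11_def algebra_simps)
  then have "q11 * q22 \<ge> (a * real n) * (a * real m)"
    using m1 a1 by (intro mult_mono) (auto simp: q22_def)
  moreover have "(a * a) * (real n * real m) > ((1 - a) * (1 - a)) * (real n * real m)"
    using m1 n2 a1 a2 by (intro mult_strict_right_mono mult_strict_mono) auto
  ultimately have "det_q > 0" by (simp add: det_q_def q12_def q21_def algebra_simps)
  moreover have "a * real m > 0" using m1 a1 by simp
  then have "th1 > 0" using am_l0 \<open>l0 < th1\<close> by linarith
  ultimately show "0 < th2" using th_prod by (metis zero_less_mult_pos)
qed

lemma eigenvalues_distinct: "distinct eigenvalues"
  using eigenvalues_order by (auto simp: eigenvalues_def)

lemma eigenvalues_pos: "x \<in> set eigenvalues \<Longrightarrow> x > 0"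
  using eigenvalues_order m1 a1 by (auto simp: eigenvalues_def)

lemma M_eq: "M = split_pattern_mat m n (a * (real m + real n - 1)) (1 - a) (1 - a) (1 - a) (a * real m) 0"
  unfolding M_def by (rule A_alpha_complete_split[OF m1])

lemma M_carrier [simp]: "M \<in> carrier_mat (m+n) (m+n)"
  by (simp add: M_def)

lemma lin_factor_prod_eigenvalues: "lin_factor_prod M eigenvalues = 0\<^sub>m (m+n) (m+n)"
proof -
  define p where "p = a * (real m + real n - 1)"
  define b where "b = 1 - a"
  define e where "e = a * real m"
  have quadratic: "(M - th1 \<cdot>\<^sub>m 1\<^sub>m (m+n)) * (M - th2 \<cdot>\<^sub>m 1\<^sub>m (m+n)) =
    split_pattern_mat m n (p*p + (real m - 1)*b*b + real n*b*b - tr_q * p + det_q)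
      (p*b + b*p + (real m - 2)*b*b + real n*b*b - tr_q * b)
      ((p + (real m - 1)*b)*b + b*e - tr_q * b)
      (b*(p + (real m - 1)*b) + e*b - tr_q * b)
      (real m*b*b + e*e - tr_q * e + det_q)
      (real m*b*b)"
    unfolding M_eq split_pattern_mat_shift_mult th_sum th_prod p_def[symmetric] b_def[symmetric] e_def[symmetric]
    by (rule split_pattern_mat_eqI) simp_all
  have "lin_factor_prod M eigenvalues = (M - l0 \<cdot>\<^sub>m 1\<^sub>m (m+n)) * ((M - e \<cdot>\<^sub>m 1\<^sub>m (m+n)) *
      ((M - th1 \<cdot>\<^sub>m 1\<^sub>m (m+n)) * (M - th2 \<cdot>\<^sub>m 1\<^sub>m (m+n))))"
    using M_carrier carrier_matD[OF M_carrier]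
    by (simp add: eigenvalues_def lin_factor_prod_Cons e_def right_mult_one_mat[of _ "m+n" "m+n"])
  also have "\<dots> = 0\<^sub>m (m+n) (m+n)"
    unfolding quadratic unfolding M_eq split_pattern_mat_shift split_pattern_mat_mult split_pattern_mat_zero[symmetric]
    unfolding p_def[symmetric] b_def[symmetric] e_def[symmetric]
    by (rule split_pattern_mat_eqI) (simp_all add: p_def b_def e_def tr_q_def det_q_def q11_def q12_def
        q21_def q22_def l0_def algebra_simps)
  finally show ?thesis .
qed

lemma distinct_lin_factor_annihilated_M: "distinct_lin_factor_annihilated M (m+n) eigenvalues"
  by unfold_locales (simp_all add: eigenvalues_distinct lin_factor_prod_eigenvalues)

definition "th1_eigvecs = split_pattern_mat m n q12 q12 q12 (th1 - q11) (th1 - q11) (th1 - q11)"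

lemma M_th1_eigvecs: "M * th1_eigvecs = th1 \<cdot>\<^sub>m th1_eigvecs"
proof -
  have "th1 * (tr_q - th1) = det_q" using th_sum th_prod by (metis add_diff_cancel_left')
  then have "th1 * (th1 - q11) = a * real m * (th1 - q11) + q12 * q21"
    unfolding tr_q_def det_q_def q22_def by (simp add: algebra_simps; linarith)
  then show ?thesis
    unfolding M_eq th1_eigvecs_def split_pattern_mat_mult split_pattern_mat_smult
    by (intro split_pattern_mat_eqI) (simp_all add: q11_def q12_def q21_def algebra_simps)
qed

lemma th1_eigvecs_nonzero: "th1_eigvecs \<noteq> 0\<^sub>m (m+n) (m+n)"
proof
  assume "th1_eigvecs = 0\<^sub>m (m+n) (m+n)"
  then have "th1_eigvecs $$ (0,0) = 0" using m1 by simp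
  then show False using m1 n2 a2 by (simp add: th1_eigvecs_def split_pattern_mat_index q12_def)
qed

end

section \<open>Cospectral mates of K_m \<or> nK_1\<close>

context distinct_lin_factor_annihilated
begin

lemma eigenproj_add_idem:
  assumes mu: "\<mu> \<in> set cs" and nu: "\<nu> \<in> set cs" and ne: "\<mu> \<noteq> \<nu>"
  shows "(eigenproj A cs \<mu> + eigenproj A cs \<nu>) * (eigenproj A cs \<mu> + eigenproj A cs \<nu>)
    = eigenproj A cs \<mu> + eigenproj A cs \<nu>"
proof -
  let ?P = "eigenproj A cs \<mu>" and ?Q = "eigenproj A cs \<nu>"
  have PQ: "?P + ?Q \<in> carrier_mat n n" by simp
  have "(?P + ?Q) * (?P + ?Q) = ?P * (?P + ?Q) + ?Q * (?P + ?Q)"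
    by (rule add_mult_distrib_mat[OF eigenproj_carrier eigenproj_carrier PQ])
  also have "\<dots> = (?P * ?P + ?P * ?Q) + (?Q * ?P + ?Q * ?Q)"
    by (simp only: mult_add_distrib_mat[OF eigenproj_carrier eigenproj_carrier eigenproj_carrier])
  finally show ?thesis
    using eigenproj_idem[OF mu] eigenproj_idem[OF nu] eigenproj_orthogonal[OF mu nu ne[symmetric]]
      eigenproj_orthogonal[OF nu mu ne] by simp
qed

lemma eigenproj_add_shift:
  assumes mu: "\<mu> \<in> set cs" and nu: "\<nu> \<in> set cs"
  shows "(A - \<mu> \<cdot>\<^sub>m 1\<^sub>m n) * (eigenproj A cs \<mu> + eigenproj A cs \<nu>) = (\<nu> - \<mu>) \<cdot>\<^sub>m eigenproj A cs \<nu>"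
proof -
  let ?P = "eigenproj A cs \<mu>" and ?Q = "eigenproj A cs \<nu>"
  have "(A - \<mu> \<cdot>\<^sub>m 1\<^sub>m n) * (?P + ?Q) = (A - \<mu> \<cdot>\<^sub>m 1\<^sub>m n) * ?P + (A - \<mu> \<cdot>\<^sub>m 1\<^sub>m n) * ?Q"
    by (rule mult_add_distrib_mat[OF _ eigenproj_carrier eigenproj_carrier]) (use A in auto)
  also have "\<dots> = (\<mu> - \<mu>) \<cdot>\<^sub>m ?P + (\<nu> - \<mu>) \<cdot>\<^sub>m ?Q"
    using shift_mult_eigen[OF A eigenproj_carrier eigenproj_eigen[OF mu]]
      shift_mult_eigen[OF A eigenproj_carrier eigenproj_eigen[OF nu]] by simp
  finally show ?thesis by (simp add: zero_smult_mat[OF eigenproj_carrier])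
qed

end

lemma fixed_vectors_vanish_without_dominating:
  fixes y :: "nat \<Rightarrow> real"
  assumes g: "simple_graph N E" and a1: "1/2 < a" and a2: "a < 1"
    and no_dom: "dominating_vertices N E = {}"
    and F: "F \<in> carrier_mat N N" and P: "P \<in> carrier_mat N N" and P_sym: "transpose_mat P = P"
    and P_idem: "P * P = P" and c: "c \<ge> 0"
    and shift: "(A_alpha a N E - (a * real N - 1) \<cdot>\<^sub>m 1\<^sub>m N) * F = c \<cdot>\<^sub>m P"
    and fixed: "\<And>i. i < N \<Longrightarrow> (\<Sum>j<N. F $$ (i,j) * y j) = y i" and sum0: "(\<Sum>i<N. y i) = 0"
    and i: "i < N"
  shows "y i = 0"
proof -
  let ?A = "A_alpha a N E" and ?l = "a * real N - 1"
  let ?B = "?A - ?l \<cdot>\<^sub>m 1\<^sub>m N"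
  have B: "?B \<in> carrier_mat N N" by auto
  have row: "?l * y i - (\<Sum>j<N. ?A $$ (i,j) * y j) = - c * (\<Sum>k<N. P $$ (i,k) * y k)" if i: "i < N" for i
  proof -
    have "(\<Sum>j<N. ?B $$ (i,j) * y j) = (\<Sum>j<N. ?A $$ (i,j) * y j - (if j = i then ?l * y i else 0))"
      using i by (intro sum.cong refl) (auto simp: algebra_simps)
    then have "(\<Sum>j<N. ?A $$ (i,j) * y j) - ?l * y i = (\<Sum>j<N. ?B $$ (i,j) * y j)"
      using i by (simp add: sum_subtractf)
    also have "\<dots> = (\<Sum>j<N. ?B $$ (i,j) * (\<Sum>k<N. F $$ (j,k) * y k))"
      by (simp add: fixed)
    also have "\<dots> = c * (\<Sum>k<N. P $$ (i,k) * y k)"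
      unfolding sum_mult_mat_assoc[OF B F i] shift using i P by (simp add: sum_distrib_left mult.assoc)
    finally show ?thesis by simp
  qed
  have "(\<Sum>i<N. y i * (?l * y i - (\<Sum>j<N. ?A $$ (i,j) * y j)))
      = (\<Sum>i<N. - c * (y i * (\<Sum>k<N. P $$ (i,k) * y k)))"
    by (intro sum.cong refl) (simp add: row)
  also have "\<dots> = - c * (\<Sum>i<N. y i * (\<Sum>k<N. P $$ (i,k) * y k))"
    by (simp add: sum_distrib_left)
  also have "\<dots> \<le> 0"
    using sym_idempotent_quadratic_nonneg[OF P P_sym P_idem, of y] c by (simp add: mult_nonneg_nonneg)
  finally show ?thesis
    using A_alpha_quadratic_form_vanishing[OF g a1 less_imp_le[OF a2] sum0 _ i] no_dom by simp
qed

lemma mat_trace_eigenproj_pair_le_one: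
  assumes ann: "distinct_lin_factor_annihilated (A_alpha a N E) N cs"
    and g: "simple_graph N E" and a1: "1/2 < a" and a2: "a < 1"
    and no_dom: "dominating_vertices N E = {}"
    and l: "a * real N - 1 \<in> set cs" and th: "\<theta> \<in> set cs" and l_th: "a * real N - 1 < \<theta>"
  shows "mat_trace (eigenproj (A_alpha a N E) cs (a * real N - 1) + eigenproj (A_alpha a N E) cs \<theta>) \<le> 1"
proof -
  interpret distinct_lin_factor_annihilated "A_alpha a N E" N cs by (rule ann)
  let ?A = "A_alpha a N E" and ?l = "a * real N - 1"
  let ?F = "eigenproj ?A cs ?l + eigenproj ?A cs \<theta>"
  have F: "?F \<in> carrier_mat N N" by simp
  have sym: "transpose_mat (eigenproj ?A cs \<mu>) = eigenproj ?A cs \<mu>" for \<mu>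
    by (rule eigenproj_symmetric[OF A_alpha_symmetric[OF g]])
  have F_sym: "transpose_mat ?F = ?F"
    by (simp only: transpose_add[OF eigenproj_carrier eigenproj_carrier] sym)
  have F_idem: "?F * ?F = ?F" by (rule eigenproj_add_idem[OF l th]) (use l_th in simp)
  show ?thesis
  proof (rule sym_idempotent_trace_le_one[OF F F_sym F_idem])
    fix y :: "nat \<Rightarrow> real"
    assume fixed: "\<And>i. i < N \<Longrightarrow> (\<Sum>j<N. ?F $$ (i,j) * y j) = y i" and sum0: "(\<Sum>i<N. y i) = 0"
    have "\<theta> - ?l \<ge> 0" using l_th by simp
    from fixed_vectors_vanish_without_dominating[OF g a1 a2 no_dom F eigenproj_carrier sym
        eigenproj_idem[OF th] this eigenproj_add_shift[OF l th] fixed sum0]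
    show "\<forall>i<N. y i = 0" by blast
  qed
qed

lemma graph_iso_complete_graph_of_cospectral:
  assumes g': "simple_graph (m + 1) E'" and m1: "1 \<le> m" and a: "a \<noteq> 0"
    and tr: "\<And>cs. mat_trace (lin_factor_prod (A_alpha a (m+1) E') cs)
      = mat_trace (lin_factor_prod (A_alpha a (m+1) (complete_split m 1)) cs)"
  shows "graph_iso (m + 1) E' (m + 1) (complete_split m 1)"
proof -
  let ?N = "m + 1"
  have "(\<Sum>i<?N. real (degree ?N E' i)) = (\<Sum>i<?N. real (degree ?N (complete_split m 1) i))"
    by (rule cospectral_A_alpha_degree_sums(1)[OF complete_split_simple_graph g' a tr])
  also have "\<dots> = real m * (real ?N - 1) + real 1 * real m"
    by (rule complete_split_degree_sums(1)[OF m1])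
  finally have deg_sum: "(\<Sum>i<?N. real (degree ?N E' i)) = real m * (real ?N - 1) + real 1 * real m" .
  have le: "real (degree ?N E' i) \<le> real ?N - 1" if "i < ?N" for i
    using degree_le[OF g' that] m1 by (simp add: of_nat_diff)
  have "real (degree ?N E' i) = real ?N - 1" if "i < ?N" for i
    using sum_eq_bound_imp_eq[OF le _ that] deg_sum by (simp add: algebra_simps)
  then have "{..<m} \<subseteq> dominating_vertices ?N E'"
    using dominating_of_degree[OF g'] by (auto simp: of_nat_diff)
  then show ?thesis
    using graph_iso_complete_split_of_dominating[OF g' _ _ deg_sum] by simp
qed

context complete_split_spectrum
begin

lemma cospectral_annihilated:
  assumes g': "simple_graph (m + n) E'"
    and tr: "\<And>cs. mat_trace (lin_factor_prod (A_alpha a (m+n) E') cs) = mat_trace (lin_factor_prod M cs)"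
  shows "distinct_lin_factor_annihilated (A_alpha a (m+n) E') (m+n) eigenvalues"
proof
  have "mat_trace (lin_factor_prod M (eigenvalues @ eigenvalues)) = 0"
    by (simp add: lin_factor_prod_append[OF M_carrier] lin_factor_prod_eigenvalues mat_trace_def)
  then show "lin_factor_prod (A_alpha a (m+n) E') eigenvalues = 0\<^sub>m (m+n) (m+n)"
    using tr by (intro lin_factor_prod_eq_zero_of_trace[OF A_alpha_carrier A_alpha_symmetric[OF g']]) simp
qed (simp_all add: eigenvalues_distinct)

lemma card_dominating_of_cospectral:
  assumes g': "simple_graph (m + n) E'"
    and tr: "\<And>cs. mat_trace (lin_factor_prod (A_alpha a (m+n) E') cs) = mat_trace (lin_factor_prod M cs)"
    and u: "u \<in> dominating_vertices (m+n) E'"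
  shows "card (dominating_vertices (m+n) E') = m"
proof -
  have l0: "a * real (m + n) - 1 \<in> set eigenvalues" by (simp add: eigenvalues_def l0_def)
  have D: "dominating_vertices (m+n) (complete_split m n) = {..<m}"
    by (rule dominating_vertices_complete_split[OF n2])
  have "0 \<in> dominating_vertices (m+n) (complete_split m n)" using D m1 by simp
  from mat_trace_eigenproj_dominating[OF _ complete_split_simple_graph a1 a2 this l0]
    mat_trace_eigenproj_dominating[OF cospectral_annihilated[OF g' tr] g' a1 a2 u l0]
    mat_trace_eigenproj_eq[OF A_alpha_carrier M_carrier tr]
  show ?thesis using distinct_lin_factor_annihilated_M D by (simp add: M_def)
qed

text \<open>For m \<ge> 2 the eigenvalues l0 and th1 of K_m \<or> nK_1 have multiplicities summing to more than
  one, which a graph without dominating vertex cannot match.\<close>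
lemma cospectral_dominating_nonempty_clique:
  assumes g': "simple_graph (m + n) E'" and m2: "2 \<le> m"
    and tr: "\<And>cs. mat_trace (lin_factor_prod (A_alpha a (m+n) E') cs) = mat_trace (lin_factor_prod M cs)"
  shows "dominating_vertices (m+n) E' \<noteq> {}"
proof
  assume no_dom: "dominating_vertices (m+n) E' = {}"
  interpret M: distinct_lin_factor_annihilated M "m+n" eigenvalues
    by (rule distinct_lin_factor_annihilated_M)
  interpret G': distinct_lin_factor_annihilated "A_alpha a (m+n) E'" "m+n" eigenvalues
    by (rule cospectral_annihilated[OF g' tr])
  have l0: "a * real (m + n) - 1 \<in> set eigenvalues" and th1: "th1 \<in> set eigenvalues"
    by (simp_all add: eigenvalues_def l0_def)
  have l0_th1: "a * real (m + n) - 1 < th1" using eigenvalues_order by (simp add: l0_def)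
  have "0 \<in> dominating_vertices (m+n) (complete_split m n)"
    using dominating_vertices_complete_split[OF n2] m2 by simp
  from mat_trace_eigenproj_dominating[OF _ complete_split_simple_graph a1 a2 this l0]
  have "mat_trace (eigenproj M eigenvalues (a * real (m + n) - 1)) = real m - 1"
    using distinct_lin_factor_annihilated_M dominating_vertices_complete_split[OF n2] by (simp add: M_def)
  moreover have "mat_trace (eigenproj M eigenvalues th1) > 0"
  proof (rule mat_trace_sym_idempotent_pos[OF M.eigenproj_carrier _ M.eigenproj_idem[OF th1]])
    show "transpose_mat (eigenproj M eigenvalues th1) = eigenproj M eigenvalues th1"
      by (rule M.eigenproj_symmetric) (simp add: M_def A_alpha_symmetric[OF complete_split_simple_graph])
    show "eigenproj M eigenvalues th1 \<noteq> 0\<^sub>m (m+n) (m+n)"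
    proof
      assume "eigenproj M eigenvalues th1 = 0\<^sub>m (m+n) (m+n)"
      moreover have "th1_eigvecs \<in> carrier_mat (m+n) (m+n)" by (simp add: th1_eigvecs_def)
      ultimately show False
        using M.eigenproj_fixes_eigen[OF th1 _ M_th1_eigvecs] th1_eigvecs_nonzero by simp
    qed
  qed
  moreover have "mat_trace (eigenproj M eigenvalues \<mu>) = mat_trace (eigenproj (A_alpha a (m+n) E') eigenvalues \<mu>)"
    for \<mu> using mat_trace_eigenproj_eq[OF A_alpha_carrier M_carrier tr] by simp
  moreover have "mat_trace (eigenproj (A_alpha a (m+n) E') eigenvalues (a * real (m + n) - 1)
      + eigenproj (A_alpha a (m+n) E') eigenvalues th1) \<le> 1"
    by (rule mat_trace_eigenproj_pair_le_one[OF cospectral_annihilated[OF g' tr] g' a1 a2 no_dom l0 th1 l0_th1])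
  ultimately show False
    using m2 by (simp add: mat_trace_add[OF G'.eigenproj_carrier G'.eigenproj_carrier])
qed

end

context complete_split_spectrum
begin

text \<open>For the star K_1 \<or> nK_1: without a dominating vertex and without isolated vertices (which
  would give eigenvalue 0), every degree d lies in [1, n - 1], so d^2 \<le> n d - (n - 1); summing
  contradicts the degree and squared degree sums.\<close>
lemma cospectral_dominating_nonempty_star:
  assumes g': "simple_graph (m + n) E'" and m: "m = 1"
    and tr: "\<And>cs. mat_trace (lin_factor_prod (A_alpha a (m+n) E') cs) = mat_trace (lin_factor_prod M cs)"
    and deg_sum: "(\<Sum>i<m+n. real (degree (m+n) E' i)) = real m * (real (m+n) - 1) + real n * real m"
    and deg_sq_sum: "(\<Sum>i<m+n. (real (degree (m+n) E' i))^2) = real m * (real (m+n) - 1)^2 + real n * (real m)^2"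
  shows "dominating_vertices (m+n) E' \<noteq> {}"
proof
  assume no_dom: "dominating_vertices (m+n) E' = {}"
  let ?N = "m + n" and ?d = "\<lambda>i. real (degree (m+n) E' i)"
  have lower: "1 \<le> ?d i" if i: "i < ?N" for i
  proof (rule ccontr)
    assume "\<not> 1 \<le> ?d i"
    then have "degree ?N E' i = 0" by simp
    then have "{j. j < ?N \<and> E' i j} = {}" by (simp add: degree_def)
    then have "\<not> E' i j" for j using g' by (auto simp: simple_graph_def)
    then have "0 \<in> set eigenvalues"
      by (rule isolated_vertex_root[OF cospectral_annihilated[OF g' tr] g' i])
    then show False using eigenvalues_pos by fastforce
  qed
  have upper: "?d i \<le> real n - 1" if i: "i < ?N" for i
    using degree_le[OF g' i] dominating_of_degree[OF g' i] no_dom m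
    by (cases "degree ?N E' i = ?N - 1") (auto simp: of_nat_diff)
  have "(?d i)^2 \<le> real n * ?d i - (real n - 1)" if i: "i < ?N" for i
  proof -
    have "(?d i - 1) * (real n - 1 - ?d i) \<ge> 0"
      using lower[OF i] upper[OF i] by (intro mult_nonneg_nonneg) auto
    then show ?thesis by (simp add: power2_eq_square algebra_simps)
  qed
  then have "(\<Sum>i<?N. (?d i)^2) \<le> (\<Sum>i<?N. real n * ?d i - (real n - 1))"
    by (intro sum_mono) simp
  also have "\<dots> = real n * (\<Sum>i<?N. ?d i) - real ?N * (real n - 1)"
    by (simp add: sum_subtractf sum_distrib_left)
  finally have "real n * real n + real n \<le> real n * (2 * real n) - (real n + 1) * (real n - 1)"
    using m unfolding deg_sum deg_sq_sum by (simp add: power2_eq_square algebra_simps)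
  then show False using n2 by (simp add: algebra_simps)
qed

lemma graph_iso_of_cospectral:
  assumes g': "simple_graph (m + n) E'"
    and tr: "\<And>cs. mat_trace (lin_factor_prod (A_alpha a (m+n) E') cs) = mat_trace (lin_factor_prod M cs)"
  shows "graph_iso (m + n) E' (m + n) (complete_split m n)"
proof -
  note degree_sums = cospectral_A_alpha_degree_sums[OF complete_split_simple_graph g' _ tr[unfolded M_def]]
  have a: "a \<noteq> 0" using a1 by simp
  have deg_sum: "(\<Sum>i<m+n. real (degree (m+n) E' i)) = real m * (real (m+n) - 1) + real n * real m"
    and deg_sq_sum: "(\<Sum>i<m+n. (real (degree (m+n) E' i))^2) = real m * (real (m+n) - 1)^2 + real n * (real m)^2"
    using degree_sums[OF a] complete_split_degree_sums[OF m1] by simp_all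
  have "dominating_vertices (m+n) E' \<noteq> {}"
  proof (cases "m = 1")
    case True
    then show ?thesis by (rule cospectral_dominating_nonempty_star[OF g' _ tr deg_sum deg_sq_sum])
  next
    case False
    then show ?thesis using m1 by (intro cospectral_dominating_nonempty_clique[OF g' _ tr]) simp
  qed
  then have "card (dominating_vertices (m+n) E') = m"
    using card_dominating_of_cospectral[OF g' tr] by blast
  then show ?thesis by (rule graph_iso_complete_split_of_dominating[OF g' subset_refl _ deg_sum])
qed

end

theorem corollary3p9:
  fixes m n :: nat and \<alpha> :: real
  assumes "m \<ge> 1" and "n \<ge> 1" and "1/2 < \<alpha>" and "\<alpha> < 1"
  shows "determined_by_A_alpha_spectrum \<alpha> (m + n) (complete_split m n)"
  unfolding determined_by_A_alpha_spectrum_def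
proof (intro allI impI)
  fix n' E'
  assume g': "simple_graph n' E'"
    and sp: "spectrum_mset (A_alpha \<alpha> n' E') = spectrum_mset (A_alpha \<alpha> (m + n) (complete_split m n))"
  have n': "n' = m + n" by (rule cospectral_dim_eq[OF A_alpha_carrier A_alpha_carrier sp])
  note tr = cospectral_trace_lin_factor_prod[OF A_alpha_carrier A_alpha_carrier sp, unfolded n']
  show "graph_iso n' E' (m + n) (complete_split m n)"
  proof (cases "n = 1")
    case True
    then show ?thesis
      using graph_iso_complete_graph_of_cospectral[of m E' \<alpha>] g' tr n' assms by simp
  next
    case False
    interpret complete_split_spectrum m n \<alpha> using assms False by unfold_locales auto
    show ?thesis using graph_iso_of_cospectral[OF _ tr[folded M_def]] g' n' by simp
  qed
qed

end
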